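(* In the setting described in the context (with the non-degeneracy condition: for every $i\neq i'$ there exists $n$ with $\Lambda_{ni}\neq\Lambda_{ni'}$), there exists an exact joint triangularizer $U_\circ$ of $\{M_n\}$ such that an approximate joint triangularizer $U$ of $\{\hat M_n\}$ can be written as $U=U_\circ e^{\alpha X}$ with $X=-X^T$, $\|X\|=1$, $\alpha>0$, and $$\alpha\le\frac{2\sigma\sqrt{d(d-1)}\,\kappa(V)^4}{\gamma}\sqrt{\sum_{n=1}^N\|M_n\|^2}\sqrt{\sum_{n=1}^N\|W_n\|^2}+O((\alpha+\sigma)^2),\qquad \gamma=\min_{i<i'}\sum_{n=1}^N(\Lambda_{ni}-\Lambda_{ni'})^2 .$$
   Context: All matrices are real; $\|\cdot\|$ is the Frobenius norm; $\kappa(V)=\sigma_{\max}(V)/\sigma_{\min}(V)$ is the condition number. ${\rm low}(A)$ is the strictly lower-triangular part of $A$. Model: $\hat M_n=M_n+\sigma W_n$, $M_n=V\,{\rm diag}(\Lambda_{n1},\dots,\Lambda_{nd})V^{-1}$, $n=1,\dots,N$, with $V$ real invertible, $\Lambda_{ni}$ real, $\sigma>0$, $W_n$ real with $\|W_n\|\le1$. An exact joint triangularizer of $\{M_n\}$ is an orthogonal $U_\circ$ with ${\rm low}(U_\circ^TM_nU_\circ)=0$ for all $n$. An approximate joint triangularizer of $\{\hat M_n\}$ is a solution (stationary point) of $\min_{U\in\mathbb O(d)}\sum_n\|{\rm low}(U^T\hat M_nU)\|^2$. The inequality is first-order, valid up to $O((\alpha+\sigma)^2)$ terms. *)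

theory Defs
  imports "HOL-Analysis.Analysis"
begin

text \<open>Matrices are real d x d matrices of type real^'d^'d; the norm on this type is the
  Euclidean norm of all entries, i.e. the Frobenius norm. The index type is linearly
  ordered so that "strictly lower triangular" makes sense.\<close>

primrec mat_pow :: "((real,'d::{finite,linorder}) vec,'d) vec \<Rightarrow> nat \<Rightarrow> ((real,'d) vec,'d) vec" where
  "mat_pow A 0 = mat 1"
| "mat_pow A (Suc k) = A ** mat_pow A k"

definition mat_exp :: "((real,'d::{finite,linorder}) vec,'d) vec \<Rightarrow> ((real,'d) vec,'d) vec" where
  "mat_exp A = (\<Sum>k. (1 / fact k) *\<^sub>R mat_pow A k)"

definition mdiag :: "('d::{finite,linorder} \<Rightarrow> real) \<Rightarrow> ((real,'d) vec,'d) vec" where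
  "mdiag v = (\<chi> i j. if i = j then v i else 0)"

definition low :: "((real,'d::{finite,linorder}) vec,'d) vec \<Rightarrow> ((real,'d) vec,'d) vec" where
  "low A = (\<chi> i j. if j < i then A $ i $ j else 0)"

definition sigma_max :: "((real,'d::{finite,linorder}) vec,'d) vec \<Rightarrow> real" where
  "sigma_max A = (SUP x\<in>{x::(real,'d) vec. norm x = 1}. norm (A *v x))"

definition sigma_min :: "((real,'d::{finite,linorder}) vec,'d) vec \<Rightarrow> real" where
  "sigma_min A = (INF x\<in>{x::(real,'d) vec. norm x = 1}. norm (A *v x))"

definition cond_num :: "((real,'d::{finite,linorder}) vec,'d) vec \<Rightarrow> real" where
  "cond_num A = sigma_max A / sigma_min A"

definition jt_obj :: "nat \<Rightarrow> (nat \<Rightarrow> ((real,'d::{finite,linorder}) vec,'d) vec) \<Rightarrow> ((real,'d) vec,'d) vec \<Rightarrow> real" where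
  "jt_obj N Ms U = (\<Sum>n\<in>{1..N}. (norm (low (transpose U ** Ms n ** U)))\<^sup>2)"

definition exact_jt :: "nat \<Rightarrow> (nat \<Rightarrow> ((real,'d::{finite,linorder}) vec,'d) vec) \<Rightarrow> ((real,'d) vec,'d) vec \<Rightarrow> bool" where
  "exact_jt N Ms U \<longleftrightarrow> orthogonal_matrix U \<and> (\<forall>n\<in>{1..N}. low (transpose U ** Ms n ** U) = 0)"

text \<open>Approximate joint triangularizer: a stationary point of the objective on the
  orthogonal group, i.e. every geodesic curve t \<mapsto> U e^{tX} (X skew) through U has zero
  derivative of the objective at t = 0.\<close>
definition approx_jt :: "nat \<Rightarrow> (nat \<Rightarrow> ((real,'d::{finite,linorder}) vec,'d) vec) \<Rightarrow> ((real,'d) vec,'d) vec \<Rightarrow> bool" where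
  "approx_jt N Ms U \<longleftrightarrow> orthogonal_matrix U \<and>
     (\<forall>X::((real,'d) vec,'d) vec. transpose X = - X \<longrightarrow>
        ((\<lambda>t. jt_obj N Ms (U ** mat_exp (t *\<^sub>R X))) has_real_derivative 0) (at 0))"

end

(* Write U = U0 e^(alpha X) with X skew, |X| = 1, and let T n = U0^T M n U0, which is upper
   triangular.  Expanding the first-order condition of the objective at U in alpha and sigma gives
     alpha * S <= sigma * sqrt (sum_n |W n|^2) * sqrt S + O((alpha + sigma)^2)
   for S = sum_n |low [T n, X]|^2.  Conversely, the columns of U0^T V, suitably permuted, form an
   upper triangular R with T n R = R D n, D n = diag (Lam n).  Conjugation by R maps [T n, X] to
   [D n, R^-1 X R], and conjugation by R or R^-1 changes norms of strictly lower parts by a factor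
   at most kappa(V); since low [D n, Z] has entries (Lam n i - Lam n j) Z i j, this gives
   S >= gamma / (2 kappa(V)^4).  Dividing the first inequality by S gives the bound. *)

theory Submission
  imports Defs
begin

section \<open>Frobenius norm\<close>

lemma norm_matrix_sq: "(norm (A::real^'n^'m))\<^sup>2 = (\<Sum>i\<in>UNIV. \<Sum>j\<in>UNIV. (A$i$j)\<^sup>2)"
  unfolding power2_norm_eq_inner by (simp add: inner_vec_def power2_eq_square)

lemma norm_matrix_sq_columns: "(norm (A::real^'n^'m))\<^sup>2 = (\<Sum>j\<in>UNIV. (norm (column j A))\<^sup>2)"
  unfolding norm_matrix_sq power2_norm_eq_inner
  by (simp add: inner_vec_def column_def power2_eq_square) (rule sum.swap)

lemma norm_transpose: "norm (transpose (A::real^'n^'m)) = norm A"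
proof -
  have "(norm (transpose A))\<^sup>2 = (norm A)\<^sup>2"
    unfolding norm_matrix_sq transpose_def by simp (rule sum.swap)
  then show ?thesis by (simp add: power2_eq_iff_nonneg)
qed

lemma norm_matrix_vector_mult_le: "norm ((A::real^'n^'m) *v x) \<le> norm A * norm x"
proof -
  have "(norm (A *v x))\<^sup>2 = (\<Sum>i\<in>UNIV. (inner (A$i) x)\<^sup>2)"
    unfolding power2_norm_eq_inner
    by (simp add: inner_vec_def matrix_vector_mul_component power2_eq_square)
  also have "\<dots> \<le> (\<Sum>i\<in>UNIV. (norm (A$i))\<^sup>2 * (norm x)\<^sup>2)"
  proof (intro sum_mono)
    fix i
    have "\<bar>inner (A$i) x\<bar> \<le> norm (A$i) * norm x" by (rule Cauchy_Schwarz_ineq2)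
    then have "(inner (A$i) x)\<^sup>2 \<le> (norm (A$i) * norm x)\<^sup>2"
      using power_mono[of _ _ 2] by fastforce
    then show "(inner (A$i) x)\<^sup>2 \<le> (norm (A$i))\<^sup>2 * (norm x)\<^sup>2"
      by (simp add: power_mult_distrib)
  qed
  also have "\<dots> = (norm A * norm x)\<^sup>2"
  proof -
    have "(norm A)\<^sup>2 = (\<Sum>i\<in>UNIV. (norm (A$i))\<^sup>2)"
      unfolding power2_norm_eq_inner by (simp add: inner_vec_def)
    then show ?thesis by (simp add: sum_distrib_right power_mult_distrib)
  qed
  finally show ?thesis by (simp add: power2_le_iff_abs_le)
qed

lemma operator_bound_nonneg:
  assumes "\<And>x. norm ((A::real^'n^'m) *v x) \<le> c * norm x"
  shows "c \<ge> 0"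
  using assms[of "axis undefined 1"] norm_ge_zero[of "A *v axis undefined 1"]
  by (simp only: norm_axis_1 mult_1_right)

lemma norm_mult_le_of_operator_bound_left:
  fixes A :: "real^'n^'m" and B :: "real^'p^'n"
  assumes bound: "\<And>x. norm (A *v x) \<le> c * norm x"
  shows "norm (A ** B) \<le> c * norm B"
proof -
  have "(norm (A ** B))\<^sup>2 = (\<Sum>j\<in>UNIV. (norm (A *v column j B))\<^sup>2)"
    unfolding norm_matrix_sq_columns
    by (simp add: column_def matrix_matrix_mult_def matrix_vector_mult_def)
  also have "\<dots> \<le> (\<Sum>j\<in>UNIV. (c * norm (column j B))\<^sup>2)"
    by (intro sum_mono power_mono bound) simp
  also have "\<dots> = (c * norm B)\<^sup>2"
    by (simp add: norm_matrix_sq_columns[of B] sum_distrib_left power_mult_distrib)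
  finally show ?thesis
    using operator_bound_nonneg[OF bound] by (simp add: power2_le_iff_abs_le)
qed

lemma operator_bound_transpose:
  fixes A :: "real^'n^'m"
  assumes bound: "\<And>x. norm (A *v x) \<le> c * norm x"
  shows "norm (transpose A *v y) \<le> c * norm y"
proof -
  let ?x = "transpose A *v y"
  have "(norm ?x)\<^sup>2 = inner (A *v ?x) y"
    by (simp add: power2_norm_eq_inner dot_lmul_matrix[symmetric] inner_commute)
  also have "\<dots> \<le> norm (A *v ?x) * norm y" by (rule norm_cauchy_schwarz)
  also have "\<dots> \<le> c * norm ?x * norm y" by (simp add: bound mult_right_mono)
  finally have "norm ?x * norm ?x \<le> norm ?x * (c * norm y)"
    by (simp add: power2_eq_square algebra_simps)
  then show ?thesis
    using operator_bound_nonneg[OF bound]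
    by (cases "norm ?x = 0") (simp_all add: mult_le_cancel_left)
qed

lemma norm_mult_le_of_operator_bound_right:
  fixes A :: "real^'n^'m" and B :: "real^'m^'p"
  assumes "\<And>x. norm (A *v x) \<le> c * norm x"
  shows "norm (B ** A) \<le> c * norm B"
  using norm_mult_le_of_operator_bound_left[OF operator_bound_transpose[OF assms], of "transpose B"]
  by (simp add: norm_transpose flip: matrix_transpose_mul)

lemma norm_matrix_mult_le: "norm ((A::real^'n^'m) ** (B::real^'p^'n)) \<le> norm A * norm B"
  by (rule norm_mult_le_of_operator_bound_left) (rule norm_matrix_vector_mult_le)

lemma norm_orthogonal_mult_vec:
  assumes "orthogonal_matrix (Q::real^'n^'n)"
  shows "norm (Q *v x) = norm x"
proof -
  have "orthogonal_transformation (\<lambda>x. Q *v x)"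
    using assms by (simp add: orthogonal_transformation_matrix)
  then show ?thesis by (simp add: orthogonal_transformation)
qed

lemma norm_orthogonal_conj_le:
  assumes "orthogonal_matrix (Q::real^'n^'n)"
  shows "norm (transpose Q ** A ** Q) \<le> norm A"
proof -
  have isometries: "\<And>x. norm (Q *v x) \<le> 1 * norm x" "\<And>x. norm (transpose Q *v x) \<le> 1 * norm x"
    using assms norm_orthogonal_mult_vec[of Q] norm_orthogonal_mult_vec[of "transpose Q"]
    by (simp_all del: transpose_matrix_vector)
  have "norm (transpose Q ** A ** Q) \<le> norm (transpose Q ** A)"
    using norm_mult_le_of_operator_bound_right[OF isometries(1)] by simp
  also have "\<dots> \<le> norm A"
    using norm_mult_le_of_operator_bound_left[OF isometries(2)] by simp
  finally show ?thesis .
qed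

lemma matrix_add_rdistrib: "((B::real^'n^'m) + C) ** (A::real^'p^'n) = B ** A + C ** A"
  by (simp add: vec_eq_iff matrix_matrix_mult_def sum.distrib algebra_simps)

lemma matrix_diff_ldistrib: "(A::real^'n^'m) ** ((B::real^'p^'n) - C) = A ** B - A ** C"
  by (simp add: vec_eq_iff matrix_matrix_mult_def sum_subtractf algebra_simps)

lemma matrix_diff_rdistrib: "((B::real^'n^'m) - C) ** (A::real^'p^'n) = B ** A - C ** A"
  by (simp add: vec_eq_iff matrix_matrix_mult_def sum_subtractf algebra_simps)

lemma matrix_scaleR_left: "(c *\<^sub>R (A::real^'n^'m)) ** (B::real^'p^'n) = c *\<^sub>R (A ** B)"
  by (simp add: vec_eq_iff matrix_matrix_mult_def sum_distrib_left algebra_simps)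

lemma matrix_scaleR_right: "(A::real^'n^'m) ** (c *\<^sub>R (B::real^'p^'n)) = c *\<^sub>R (A ** B)"
  by (simp add: vec_eq_iff matrix_matrix_mult_def sum_distrib_left algebra_simps)

lemmas matrix_mult_distribs = matrix_add_ldistrib matrix_add_rdistrib matrix_diff_ldistrib
  matrix_diff_rdistrib matrix_scaleR_left matrix_scaleR_right

lemma column_matrix_mult: "column j (A ** B) = A *v column j B"
  by (simp add: column_def matrix_matrix_mult_def matrix_vector_mult_def vec_eq_iff)

lemma transpose_add: "transpose ((A::real^'n^'m) + B) = transpose A + transpose B"
  by (simp add: vec_eq_iff transpose_def)

lemma
  assumes "invertible (A::real^'n^'n)"
  shows matrix_inv_right: "A ** matrix_inv A = mat 1"
    and matrix_inv_left: "matrix_inv A ** A = mat 1"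
proof -
  have "\<exists>A'. A ** A' = mat 1 \<and> A' ** A = mat 1"
    using assms by (simp add: invertible_def)
  then have "A ** matrix_inv A = mat 1 \<and> matrix_inv A ** A = mat 1"
    unfolding matrix_inv_def by (rule someI_ex)
  then show "A ** matrix_inv A = mat 1" "matrix_inv A ** A = mat 1" by auto
qed

definition commutator :: "real^'n^'n \<Rightarrow> real^'n^'n \<Rightarrow> real^'n^'n" where
  "commutator A B = A ** B - B ** A"

lemma norm_commutator_le: "norm (commutator A B) \<le> 2 * norm A * norm B"
proof -
  have "norm (commutator A B) \<le> norm (A ** B) + norm (B ** A)"
    unfolding commutator_def by (rule norm_triangle_ineq4)
  also have "\<dots> \<le> norm A * norm B + norm B * norm A" by (intro add_mono norm_matrix_mult_le)
  finally show ?thesis by simp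
qed

lemma low_nth [simp]: "low A $ i $ j = (if j < i then A$i$j else 0)"
  by (simp add: low_def)

lemma low_add: "low (A + B) = low A + low B"
  and low_scaleR: "low (c *\<^sub>R A) = c *\<^sub>R low A"
  by (simp_all add: vec_eq_iff)

lemma low_eq_0_iff: "low A = 0 \<longleftrightarrow> (\<forall>i j. j < i \<longrightarrow> A$i$j = 0)"
  by (auto simp: vec_eq_iff)

lemma low_minus_low: "low (A - low A) = 0"
  by (simp add: vec_eq_iff)

lemma norm_low_sq: "(norm (low A))\<^sup>2 = (\<Sum>i\<in>UNIV. \<Sum>j\<in>UNIV. if j < i then (A$i$j)\<^sup>2 else 0)"
  unfolding norm_matrix_sq by (intro sum.cong refl) auto

lemma norm_low_le: "norm (low A) \<le> norm A"
proof -
  have "(norm (low A))\<^sup>2 \<le> (norm A)\<^sup>2"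
    unfolding norm_low_sq norm_matrix_sq by (intro sum_mono) auto
  then show ?thesis by (simp add: power2_le_iff_abs_le)
qed

lemma low_mult_upper:
  assumes "low A = 0" "low B = 0"
  shows "low (A ** B) = 0"
proof -
  have "A$i$k * B$k$j = 0" if "j < i" for i j k
    using assms that unfolding low_eq_0_iff by (cases "k < i") auto
  then show ?thesis
    by (auto simp: low_eq_0_iff matrix_matrix_mult_def intro!: sum.neutral)
qed

lemma low_conj_upper:
  assumes "low R = 0" "low S = 0"
  shows "low (R ** low Z ** S) = low (R ** Z ** S)"
proof -
  have "R ** Z ** S = R ** low Z ** S + R ** (Z - low Z) ** S"
    by (simp add: matrix_mult_distribs)
  moreover have "low (R ** (Z - low Z) ** S) = 0"
    by (intro low_mult_upper assms low_minus_low)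
  ultimately show ?thesis by (simp add: low_add)
qed

lemma norm_skew_sq:
  assumes "transpose X = - X"
  shows "(norm X)\<^sup>2 = 2 * (norm (low X))\<^sup>2"
proof -
  have skew: "X$j$i = - X$i$j" for i j
    using arg_cong[OF assms, of "\<lambda>A. A $ i $ j"] by (simp add: transpose_def)
  then have diag: "X$i$i = 0" for i
    using skew[of i i] by linarith
  have sq: "(X$j$i)\<^sup>2 = (X$i$j)\<^sup>2" for i j
    by (simp add: skew[of i j])
  have "(norm X)\<^sup>2 = (\<Sum>i\<in>UNIV. \<Sum>j\<in>UNIV. (if j < i then (X$i$j)\<^sup>2 else 0) + (if i < j then (X$i$j)\<^sup>2 else 0))"
    unfolding norm_matrix_sq by (intro sum.cong refl) (auto simp: diag not_less_iff_gr_or_eq)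
  also have "\<dots> = (norm (low X))\<^sup>2 + (\<Sum>i\<in>UNIV. \<Sum>j\<in>UNIV. if i < j then (X$i$j)\<^sup>2 else 0)"
    by (simp add: sum.distrib norm_low_sq)
  also have "(\<Sum>i\<in>UNIV. \<Sum>j\<in>UNIV. if i < j then (X$i$j)\<^sup>2 else 0)
      = (\<Sum>j\<in>UNIV. \<Sum>i\<in>UNIV. if i < j then (X$i$j)\<^sup>2 else 0)"
    by (rule sum.swap)
  also have "\<dots> = (norm (low X))\<^sup>2"
    unfolding norm_low_sq by (intro sum.cong refl) (simp add: sq)
  finally show ?thesis by simp
qed

lemma mdiag_mult_nth: "(mdiag d ** Z) $ i $ j = d i * Z$i$j"
  by (simp add: matrix_matrix_mult_def mdiag_def if_distrib if_distribR cong: if_cong)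

lemma mult_mdiag_nth: "(Z ** mdiag d) $ i $ j = Z$i$j * d j"
  by (simp add: matrix_matrix_mult_def mdiag_def if_distrib if_distribR cong: if_cong)

lemma commutator_mdiag_nth: "commutator (mdiag d) Z $ i $ j = (d i - d j) * Z$i$j"
  by (simp add: commutator_def mdiag_mult_nth mult_mdiag_nth algebra_simps)

lemma conj_mdiag_mult_column:
  fixes V :: "((real,'n::{finite,linorder}) vec,'n) vec"
  assumes "invertible V"
  shows "(V ** mdiag d ** matrix_inv V) *v column j V = d j *\<^sub>R column j V"
proof -
  have "(V ** mdiag d ** matrix_inv V) *v column j V = (V ** mdiag d ** (matrix_inv V ** V)) *v axis j 1"
    by (simp add: matrix_vector_mult_basis[symmetric] matrix_vector_mul_assoc matrix_mul_assoc)
  also have "\<dots> = V *v (mdiag d *v axis j 1)"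
    by (simp add: matrix_inv_left[OF assms] matrix_vector_mul_assoc)
  also have "mdiag d *v axis j 1 = d j *\<^sub>R axis j 1"
    unfolding matrix_vector_mult_basis by (auto simp: column_def mdiag_def axis_def vec_eq_iff)
  finally show ?thesis
    by (simp add: matrix_vector_mult_scaleR matrix_vector_mult_basis)
qed

lemma column_nonzero:
  assumes "invertible (V::real^'n^'n)"
  shows "column j V \<noteq> 0"
proof
  assume "column j V = 0"
  then have "V *v axis j 1 = V *v 0" by (simp add: matrix_vector_mult_basis)
  then have "axis j (1::real) = 0" by (rule injD[OF inj_matrix_vector_mult[OF assms]])
  then show False by simp
qed

lemma eigenvalue_le_norm_conj_mdiag:
  fixes V :: "((real,'n::{finite,linorder}) vec,'n) vec"
  assumes "invertible V"
  shows "\<bar>d j\<bar> \<le> norm (V ** mdiag d ** matrix_inv V)"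
proof -
  have "\<bar>d j\<bar> * norm (column j V) = norm ((V ** mdiag d ** matrix_inv V) *v column j V)"
    by (simp add: conj_mdiag_mult_column[OF assms])
  also have "\<dots> \<le> norm (V ** mdiag d ** matrix_inv V) * norm (column j V)"
    by (rule norm_matrix_vector_mult_le)
  finally show ?thesis using column_nonzero[OF assms, of j] by simp
qed

lemma norm_mult_vec_le_sigma_max: "norm ((A::((real,'n::{finite,linorder}) vec,'n) vec) *v x) \<le> sigma_max A * norm x"
proof (cases "x = 0")
  case False
  define y where "y = (1 / norm x) *\<^sub>R x"
  have "norm (A *v z) \<le> norm A" if "norm z = 1" for z
    using norm_matrix_vector_mult_le[of A z] that by simp
  then have "bdd_above ((\<lambda>x. norm (A *v x)) ` {x. norm x = 1})"
    by (intro bdd_aboveI2[where M = "norm A"]) auto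
  moreover have "norm y = 1" using False by (simp add: y_def)
  ultimately have "norm (A *v y) \<le> sigma_max A"
    unfolding sigma_max_def by (intro cSUP_upper) auto
  moreover have "norm (A *v y) = norm (A *v x) / norm x"
    by (simp add: y_def matrix_vector_mult_scaleR)
  ultimately show ?thesis using False by (simp add: divide_le_eq mult.commute)
qed simp

lemma sigma_min_le_norm_mult_vec: "sigma_min (A::((real,'n::{finite,linorder}) vec,'n) vec) * norm x \<le> norm (A *v x)"
proof (cases "x = 0")
  case False
  define y where "y = (1 / norm x) *\<^sub>R x"
  have "bdd_below ((\<lambda>x. norm (A *v x)) ` {x. norm x = 1})"
    by (rule bdd_belowI[where m = 0]) auto
  moreover have "norm y = 1" using False by (simp add: y_def)
  ultimately have "sigma_min A \<le> norm (A *v y)"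
    unfolding sigma_min_def by (intro cINF_lower) auto
  moreover have "norm (A *v y) = norm (A *v x) / norm x"
    by (simp add: y_def matrix_vector_mult_scaleR)
  ultimately show ?thesis using False by (simp add: le_divide_eq)
qed simp

lemma sigma_min_le_sigma_max: "sigma_min (A::((real,'n::{finite,linorder}) vec,'n) vec) \<le> sigma_max A"
  using sigma_min_le_norm_mult_vec[of A "axis undefined 1"]
    norm_mult_vec_le_sigma_max[of A "axis undefined 1"] by simp

lemma sigma_min_pos:
  assumes "invertible (A::((real,'n::{finite,linorder}) vec,'n) vec)"
  shows "sigma_min A > 0"
proof -
  let ?B = "matrix_inv A"
  have "?B \<noteq> 0"
  proof
    assume "?B = 0"
    then have "(mat 1 :: ((real,'n) vec,'n) vec) $ undefined $ undefined = 0"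
      using matrix_inv_left[OF assms] by simp
    then show False by (simp add: mat_def)
  qed
  then have nB: "norm ?B > 0" by simp
  have "1 / norm ?B \<le> norm (A *v x)" if "norm x = 1" for x
  proof -
    have "x = ?B *v (A *v x)"
      by (simp add: matrix_inv_left[OF assms] matrix_vector_mul_assoc)
    then have "1 \<le> norm ?B * norm (A *v x)"
      using norm_matrix_vector_mult_le[of ?B "A *v x"] that by simp
    then show ?thesis using nB by (simp add: divide_le_eq mult.commute)
  qed
  then have "1 / norm ?B \<le> sigma_min A"
    unfolding sigma_min_def by (intro cINF_greatest) (auto intro: norm_axis_1)
  moreover have "1 / norm ?B > 0" using nB by simp
  ultimately show ?thesis by linarith
qed

lemma cond_num_ge_1:
  assumes "invertible (V::((real,'n::{finite,linorder}) vec,'n) vec)"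
  shows "cond_num V \<ge> 1"
  using sigma_min_pos[OF assms] sigma_min_le_sigma_max[of V] by (simp add: cond_num_def)

section \<open>Matrix exponential\<close>

lemma norm_mat_pow_Suc_le: "norm (mat_pow Y (Suc k)) \<le> norm Y ^ Suc k"
proof (induction k)
  case (Suc k)
  have "norm (mat_pow Y (Suc (Suc k))) = norm (Y ** mat_pow Y (Suc k))"
    by (simp only: mat_pow.simps(2))
  also have "\<dots> \<le> norm Y * norm (mat_pow Y (Suc k))" by (rule norm_matrix_mult_le)
  also have "\<dots> \<le> norm Y * norm Y ^ Suc k" using Suc by (simp add: mult_left_mono)
  finally show ?case by simp
qed simp

lemma two_power_le_fact: "(2::real) ^ (n + 1) \<le> fact (n + 2)"
proof (induction n)
  case (Suc n)
  have "(2::real) ^ (Suc n + 1) = 2 * 2 ^ (n + 1)" by simp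
  also have "\<dots> \<le> of_nat (n + 3) * fact (n + 2)" using Suc by (intro mult_mono) auto
  also have "\<dots> = fact (Suc n + 2)" by (simp add: fact_Suc algebra_simps)
  finally show ?case .
qed simp

lemma norm_mat_exp_remainder_le:
  assumes "norm Y \<le> 1"
  shows "norm (mat_exp Y - mat 1 - Y) \<le> (norm Y)\<^sup>2"
proof -
  define f where "f k = (1 / fact k) *\<^sub>R mat_pow Y k" for k
  define g where "g n = (norm Y)\<^sup>2 * ((1/2) * (1/2)^n)" for n :: nat
  have f_le_g: "norm (f (n + 2)) \<le> g n" for n
  proof -
    have "norm (f (n + 2)) = norm (mat_pow Y (Suc (Suc n))) / fact (n + 2)"
      by (simp add: f_def)
    also have "\<dots> \<le> norm Y ^ (n + 2) / fact (n + 2)"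
      using norm_mat_pow_Suc_le[of Y "Suc n"] by (intro divide_right_mono) auto
    also have "\<dots> \<le> (norm Y)\<^sup>2 / 2 ^ (n + 1)"
    proof (intro frac_le)
      show "norm Y ^ (n + 2) \<le> (norm Y)\<^sup>2"
        by (rule power_decreasing) (use assms in auto)
    qed (use two_power_le_fact[of n] in auto)
    also have "\<dots> = g n" by (simp add: g_def power_one_over field_simps)
    finally show ?thesis .
  qed
  have g_sums: "g sums ((norm Y)\<^sup>2 * 1)"
    unfolding g_def
    by (intro sums_mult) (use geometric_sums[of "1/2::real"] sums_mult[of _ _ "1/2"] in force)
  have summable_tail: "summable (\<lambda>n. norm (f (n + 2)))"
    by (rule summable_comparison_test[OF _ sums_summable[OF g_sums]]) (use f_le_g in auto)
  have "summable f"
    using summable_iff_shift[of f 2] summable_norm_cancel[OF summable_tail] by simp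
  then have "mat_exp Y = (\<Sum>n. f (n + 2)) + sum f {..<2}"
    unfolding mat_exp_def f_def[symmetric] by (rule suminf_split_initial_segment)
  moreover have "sum f {..<2} = mat 1 + Y"
    by (simp add: f_def numeral_2_eq_2)
  ultimately have "norm (mat_exp Y - mat 1 - Y) \<le> (\<Sum>n. norm (f (n + 2)))"
    using summable_norm[OF summable_tail] by simp
  also have "\<dots> \<le> (\<Sum>n. g n)"
    by (rule suminf_le) (use f_le_g summable_tail sums_summable[OF g_sums] in auto)
  also have "\<dots> = (norm Y)\<^sup>2" using g_sums sums_unique by fastforce
  finally show ?thesis .
qed

lemma mat_exp_zero: "mat_exp 0 = mat 1"
  using norm_mat_exp_remainder_le[of 0] by simp

lemma norm_congruence_remainder_le:
  fixes A E Y :: "real^'n^'n"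
  assumes nE: "norm E \<le> t\<^sup>2" and nY: "norm Y \<le> 2 * \<bar>t\<bar>"
  shows "norm (transpose E ** A + A ** E + transpose Y ** A ** Y) \<le> 6 * t\<^sup>2 * norm A"
proof -
  have "norm (transpose E ** A) \<le> norm E * norm A"
    using norm_matrix_mult_le[of "transpose E" A] by (simp add: norm_transpose)
  also have "\<dots> \<le> t\<^sup>2 * norm A" using nE by (rule mult_right_mono) simp
  finally have EA: "norm (transpose E ** A) \<le> t\<^sup>2 * norm A" .
  have "norm (A ** E) \<le> norm A * norm E" by (rule norm_matrix_mult_le)
  also have "\<dots> \<le> norm A * t\<^sup>2" using nE by (rule mult_left_mono) simp
  finally have AE: "norm (A ** E) \<le> norm A * t\<^sup>2" .
  have "norm (transpose Y ** A ** Y) \<le> norm (transpose Y ** A) * norm Y"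
    by (rule norm_matrix_mult_le)
  also have "\<dots> \<le> (norm Y * norm A) * norm Y"
    using norm_matrix_mult_le[of "transpose Y" A] by (simp add: norm_transpose mult_right_mono)
  also have "\<dots> \<le> (2 * \<bar>t\<bar>) * norm A * (2 * \<bar>t\<bar>)"
    using nY by (intro mult_mono) auto
  finally have YAY: "norm (transpose Y ** A ** Y) \<le> (2 * \<bar>t\<bar>) * norm A * (2 * \<bar>t\<bar>)" .
  have "norm (transpose E ** A + A ** E + transpose Y ** A ** Y)
      \<le> norm (transpose E ** A) + norm (A ** E) + norm (transpose Y ** A ** Y)"
    by (meson norm_triangle_ineq order_trans add_mono order_refl)
  also have "\<dots> \<le> t\<^sup>2 * norm A + norm A * t\<^sup>2 + (2 * \<bar>t\<bar>) * norm A * (2 * \<bar>t\<bar>)"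
    using EA AE YAY by (rule add_mono[OF add_mono])
  also have "\<dots> = 6 * t\<^sup>2 * norm A"
    by (simp add: power2_eq_square abs_mult_self_eq algebra_simps)
  finally show ?thesis .
qed

lemma congruence_mat_exp_expansion:
  assumes skew: "transpose X = - X" and nX: "norm X = 1" and t1: "\<bar>t\<bar> \<le> 1"
  obtains Rt where "transpose (mat_exp (t *\<^sub>R X)) ** A ** mat_exp (t *\<^sub>R X)
      = A + t *\<^sub>R commutator A X + Rt"
    and "norm Rt \<le> 6 * t\<^sup>2 * norm A"
proof -
  define E where "E = mat_exp (t *\<^sub>R X) - mat 1 - t *\<^sub>R X"
  have nE: "norm E \<le> t\<^sup>2"
    using norm_mat_exp_remainder_le[of "t *\<^sub>R X"] nX t1 by (simp add: E_def power2_abs)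
  define Y where "Y = t *\<^sub>R X + E"
  have nY: "norm Y \<le> 2 * \<bar>t\<bar>"
  proof -
    have "norm Y \<le> \<bar>t\<bar> + t\<^sup>2"
      using norm_triangle_ineq[of "t *\<^sub>R X" E] nE nX by (simp add: Y_def)
    moreover have "t\<^sup>2 \<le> \<bar>t\<bar>"
      using t1 mult_right_le_one_le[of "\<bar>t\<bar>" "\<bar>t\<bar>"] by (simp add: power2_eq_square)
    ultimately show ?thesis by simp
  qed
  have "transpose (mat 1 + Y) ** A ** (mat 1 + Y)
      = A + (transpose Y ** A + A ** Y) + transpose Y ** A ** Y"
    by (simp add: transpose_add matrix_mult_distribs algebra_simps)
  also have "transpose Y ** A + A ** Y = t *\<^sub>R commutator A X + (transpose E ** A + A ** E)"
    by (simp add: Y_def transpose_add transpose_scalar skew commutator_def matrix_mult_distribs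
        algebra_simps)
  also have "mat 1 + Y = mat_exp (t *\<^sub>R X)"
    by (simp add: Y_def E_def)
  finally have "transpose (mat_exp (t *\<^sub>R X)) ** A ** mat_exp (t *\<^sub>R X)
      = A + t *\<^sub>R commutator A X + (transpose E ** A + A ** E + transpose Y ** A ** Y)"
    by (simp only: add.assoc)
  then show ?thesis using norm_congruence_remainder_le[OF nE nY] by (rule that)
qed

section \<open>Existence of an exact joint triangularizer\<close>

lemma transpose_mult_mult_nth:
  "(transpose A ** B ** C) $ i $ j = inner (column i A) (B *v column j C)"
  for A B C :: "real^'n^'n"
  by (simp add: matrix_matrix_mult_def matrix_vector_mult_def inner_vec_def column_def
      transpose_def sum_distrib_left sum_distrib_right mult.assoc) (rule sum.swap)

lemma axis_notin_span_lower:
  "axis k (1::real) \<notin> span ((\<lambda>j. axis j 1) ` {j::'n::{finite,linorder}. j < k})"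
proof -
  have "span ((\<lambda>j. axis j 1) ` {j. j < k}) \<subseteq> {x. x $ k = (0::real)}"
    by (rule span_minimal) (auto simp: subspace_def axis_def)
  then show ?thesis by auto
qed

lemma column_notin_span_lower:
  fixes V :: "((real,'n::{finite,linorder}) vec,'n) vec"
  assumes "invertible V"
  shows "column k V \<notin> span ((\<lambda>j. column j V) ` {j. j < k})"
proof
  have "(\<lambda>j. column j V) ` {j. j < k} = (\<lambda>x. V *v x) ` ((\<lambda>j. axis j 1) ` {j. j < k})"
    by (auto simp: image_image matrix_vector_mult_basis)
  moreover assume "column k V \<in> span ((\<lambda>j. column j V) ` {j. j < k})"
  ultimately obtain y where y: "y \<in> span ((\<lambda>j. axis j 1) ` {j. j < k})" "V *v axis k 1 = V *v y"
    by (auto simp: span_linear_image[OF matrix_vector_mul_linear] matrix_vector_mult_basis)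
  have "axis k 1 = y" using injD[OF inj_matrix_vector_mult[OF assms] y(2)] .
  then show False using axis_notin_span_lower y(1) by blast
qed

lemma exists_unit_orthogonal_to_lower_columns:
  fixes V :: "((real,'n::{finite,linorder}) vec,'n) vec"
  assumes "invertible V"
  shows "\<exists>u. norm u = 1 \<and> u \<in> span ((\<lambda>j. column j V) ` {j. j \<le> k}) \<and>
    (\<forall>w \<in> span ((\<lambda>j. column j V) ` {j. j < k}). orthogonal u w)"
proof -
  let ?S = "(\<lambda>j. column j V) ` {j. j < k}"
  let ?T = "(\<lambda>j. column j V) ` {j. j \<le> k}"
  obtain y z where yz: "y \<in> span ?S" "\<And>w. w \<in> span ?S \<Longrightarrow> orthogonal z w" "column k V = y + z"
    using orthogonal_subspace_decomp_exists by metis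
  have "z \<noteq> 0" using yz(1,3) column_notin_span_lower[OF assms, of k] by auto
  moreover have "z \<in> span ?T"
  proof -
    have "span ?S \<subseteq> span ?T" by (intro span_mono) auto
    moreover have "column k V \<in> span ?T" by (intro span_base) auto
    ultimately show ?thesis
      using yz(1,3) span_diff[of "column k V" ?T y] by (auto simp: algebra_simps)
  qed
  ultimately show ?thesis
    using yz(2) by (intro exI[of _ "(1 / norm z) *\<^sub>R z"]) (auto simp: span_mul orthogonal_clauses)
qed

lemma span_eigenvectors_invariant:
  fixes M :: "real^'n^'n"
  assumes "\<And>l. l \<in> S \<Longrightarrow> M *v v l = c l *\<^sub>R v l"
    and "w \<in> span (v ` S)"
  shows "M *v w \<in> span (v ` S)"
  using assms(2)
proof (induction rule: span_induct_alt)
  case (step a x y)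
  then obtain l where l: "l \<in> S" "x = v l" by auto
  have "M *v (a *\<^sub>R x + y) = (a * c l) *\<^sub>R v l + M *v y"
    using assms(1)[OF l(1)] l(2)
    by (simp add: matrix_vector_right_distrib scalar_mult_eq_scaleR matrix_vector_mult_scaleR)
  moreover have "(a * c l) *\<^sub>R v l \<in> span (v ` S)" using l by (intro span_mul span_base) auto
  ultimately show ?case using step by (simp add: span_add scalar_mult_eq_scaleR)
qed (simp add: span_zero)

text \<open>Gram--Schmidt on the columns of V: the k-th column of U0 lies in the span of the
  first k eigenvectors, which every M n leaves invariant.\<close>

lemma exact_jt_exists:
  fixes V :: "((real,'n::{finite,linorder}) vec,'n) vec"
  assumes "invertible V"
  shows "\<exists>U0. exact_jt N (\<lambda>n. V ** mdiag (Lam n) ** matrix_inv V) U0"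
proof -
  let ?v = "\<lambda>j. column j V"
  obtain u where u: "\<And>k. norm (u k) = 1" "\<And>k. u k \<in> span (?v ` {j. j \<le> k})"
    "\<And>k w. w \<in> span (?v ` {j. j < k}) \<Longrightarrow> orthogonal (u k) w"
    using exists_unit_orthogonal_to_lower_columns[OF assms] by metis
  define U0 where "U0 = (\<chi> i k. u k $ i)"
  have column_U0: "column k U0 = u k" for k by (simp add: U0_def column_def vec_eq_iff)
  have lower_span: "span (?v ` {l. l \<le> j}) \<subseteq> span (?v ` {l. l < i})" if "j < i" for i j
    using that by (intro span_mono) auto
  have "orthogonal (u i) (u j)" if "j < i" for i j
    using u(3)[of "u j" i] u(2)[of j] lower_span[OF that] by auto
  then have "orthogonal_matrix U0"
    unfolding orthogonal_matrix_orthonormal_columns column_U0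
    using u(1) by (metis orthogonal_commute neqE)
  moreover have "low (transpose U0 ** (V ** mdiag (Lam n) ** matrix_inv V) ** U0) = 0" for n
  proof -
    let ?M = "V ** mdiag (Lam n) ** matrix_inv V"
    have "?M *v u j \<in> span (?v ` {l. l \<le> j})" for j
      using conj_mdiag_mult_column[OF assms] u(2)
      by (intro span_eigenvectors_invariant[where c = "Lam n"]) auto
    then have "orthogonal (u i) (?M *v u j)" if "j < i" for i j
      using u(3)[of _ i] lower_span[OF that] by auto
    then show ?thesis
      by (simp add: low_eq_0_iff transpose_mult_mult_nth column_U0 orthogonal_def)
  qed
  ultimately show ?thesis by (auto simp: exact_jt_def)
qed

section \<open>Structure of an exact joint triangularizer\<close>

definition last_nonzero :: "(real,'n::{finite,linorder}) vec \<Rightarrow> 'n" where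
  "last_nonzero s = Max {i. s$i \<noteq> 0}"

lemma last_nonzero_nth:
  assumes "s \<noteq> 0"
  shows "s $ last_nonzero s \<noteq> 0"
proof -
  have "{i. s$i \<noteq> 0} \<noteq> {}" using assms by (auto simp: vec_eq_iff)
  then show ?thesis using Max_in[of "{i. s$i \<noteq> 0}"] by (simp add: last_nonzero_def)
qed

lemma nth_gt_last_nonzero:
  assumes "last_nonzero s < i"
  shows "s $ i = 0"
proof (rule ccontr)
  assume "s $ i \<noteq> 0"
  then have "i \<le> last_nonzero s" unfolding last_nonzero_def by (intro Max_ge) auto
  then show False using assms by simp
qed

lemma upper_mult_vec_last_nonzero:
  assumes "low T = 0"
  shows "(T *v s) $ last_nonzero s = T $ last_nonzero s $ last_nonzero s * s $ last_nonzero s"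
proof -
  let ?p = "last_nonzero s"
  have entry: "T $ ?p $ k * s $ k = (if k = ?p then T $ ?p $ ?p * s $ ?p else 0)" for k
  proof (cases k ?p rule: linorder_cases)
    case less
    then show ?thesis using assms unfolding low_eq_0_iff by simp
  next
    case greater
    then show ?thesis using nth_gt_last_nonzero[of s k] by simp
  qed simp
  have "(T *v s) $ ?p = (\<Sum>k\<in>UNIV. T $ ?p $ k * s $ k)"
    by (simp add: matrix_vector_mult_def)
  also have "\<dots> = (\<Sum>k\<in>UNIV. if k = ?p then T $ ?p $ ?p * s $ ?p else 0)"
    by (rule sum.cong[OF refl entry])
  finally show ?thesis by simp
qed

lemma upper_eigenvalue_on_diagonal:
  assumes "low T = 0" "T *v s = c *\<^sub>R s" "s \<noteq> 0"
  shows "T $ last_nonzero s $ last_nonzero s = c"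
  using upper_mult_vec_last_nonzero[OF assms(1), of s] last_nonzero_nth[OF assms(3)] assms(2)
  by simp

lemma upper_inverse_upper:
  fixes R S :: "((real,'n::{finite,linorder}) vec,'n) vec"
  assumes "R ** S = mat 1" "low R = 0" "\<And>k. R$k$k \<noteq> 0"
  shows "low S = 0"
proof (rule ccontr)
  assume "low S \<noteq> 0"
  then obtain i k where ik: "k < i" "S$i$k \<noteq> 0" unfolding low_eq_0_iff by auto
  define c where "c = column k S"
  let ?p = "last_nonzero c"
  have "c \<noteq> 0" using ik by (auto simp: c_def column_def vec_eq_iff)
  have "i \<le> ?p" using nth_gt_last_nonzero[of c i] ik by (force simp: c_def column_def)
  then have "?p \<noteq> k" using ik by simp
  moreover have "R *v c = axis k 1"
    using arg_cong[OF assms(1), of "column k"]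
    by (simp add: c_def column_def matrix_matrix_mult_def matrix_vector_mult_def mat_def axis_def
        vec_eq_iff)
  ultimately have "R $ ?p $ ?p * c $ ?p = 0"
    using upper_mult_vec_last_nonzero[OF assms(2), of c] by (simp add: axis_def)
  then show False using assms(3) last_nonzero_nth[OF \<open>c \<noteq> 0\<close>] by simp
qed

text \<open>Each eigenvector column of S has its last nonzero entry at a position where every
  T n carries the corresponding eigenvalue on the diagonal; by non-degeneracy these positions
  are distinct, so permuting the columns of S makes it upper triangular.\<close>

lemma upper_column_permutation_of_eigenbasis:
  fixes T :: "nat \<Rightarrow> ((real,'n::{finite,linorder}) vec,'n) vec" and S :: "((real,'n) vec,'n) vec"
  assumes S: "invertible S"
    and upper: "\<And>n. n \<in> I \<Longrightarrow> low (T n) = 0"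
    and eig: "\<And>n j. n \<in> I \<Longrightarrow> T n *v column j S = d n j *\<^sub>R column j S"
    and nondeg: "\<And>j j'. j \<noteq> j' \<Longrightarrow> \<exists>n\<in>I. d n j \<noteq> d n j'"
  obtains q where "bij q" "low (\<chi> i k. S $ i $ q k) = 0" "\<And>k. S $ k $ q k \<noteq> 0"
proof -
  define p where "p j = last_nonzero (column j S)" for j
  have diag: "T n $ p j $ p j = d n j" if "n \<in> I" for n j
    unfolding p_def
    by (rule upper_eigenvalue_on_diagonal[OF upper[OF that] eig[OF that] column_nonzero[OF S]])
  have "inj p"
  proof (rule injI, rule ccontr)
    fix j j' assume "p j = p j'" "j \<noteq> j'"
    then obtain n where "n \<in> I" "d n j \<noteq> d n j'" using nondeg by blast
    then show False using diag[of n j] diag[of n j'] \<open>p j = p j'\<close> by simp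
  qed
  then have "bij p" by (simp add: bij_def finite_UNIV_inj_surj)
  define q where "q = inv p"
  have p_q: "p (q k) = k" for k using \<open>bij p\<close> by (simp add: q_def bij_is_surj surj_f_inv_f)
  show ?thesis
  proof
    show "bij q" using \<open>bij p\<close> by (simp add: q_def bij_imp_bij_inv)
    show "low (\<chi> i k. S $ i $ q k) = 0"
      unfolding low_eq_0_iff
      using nth_gt_last_nonzero[of "column (q _) S"] p_q by (simp add: p_def column_def)
    show "S $ k $ q k \<noteq> 0" for k
      using last_nonzero_nth[OF column_nonzero[OF S], of "q k"] p_q[of k]
      by (simp add: p_def column_def)
  qed
qed

lemma permute_columns_mult_vec:
  assumes "bij q"
  shows "(\<chi> i k. S $ i $ q k) *v x = S *v (\<chi> j. x $ inv q j)"
proof -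
  have "(\<Sum>k\<in>UNIV. S $ i $ q k * x $ k) = (\<Sum>j\<in>UNIV. S $ i $ j * x $ inv q j)" for i
    using sum.reindex_bij_betw[of q UNIV UNIV "\<lambda>j. S $ i $ j * x $ inv q j"] assms
    by (simp add: bij_betw_def bij_is_inj inv_f_f)
  then show ?thesis by (simp add: matrix_vector_mult_def vec_eq_iff)
qed

lemma norm_permute_vec:
  fixes x :: "real^'n"
  assumes "bij p"
  shows "norm (\<chi> j. x $ p j) = norm x"
proof -
  have "(norm (\<chi> j. x $ p j))\<^sup>2 = (norm x)\<^sup>2"
    using sum.reindex_bij_betw[of p UNIV UNIV "\<lambda>j. (x $ j)\<^sup>2"] assms
    unfolding power2_norm_eq_inner by (simp add: inner_vec_def power2_eq_square bij_betw_def)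
  then show ?thesis by (simp add: power2_eq_iff_nonneg)
qed

lemma permute_columns_of_eigenbasis:
  assumes "\<And>j. T *v column j S = d j *\<^sub>R column j S"
  shows "T ** (\<chi> i k. S $ i $ q k) = (\<chi> i k. S $ i $ q k) ** mdiag (\<lambda>k. d (q k))"
proof -
  have "(T ** (\<chi> i k. S $ i $ q k)) $ i $ k = (T *v column (q k) S) $ i" for i k
    by (simp add: matrix_matrix_mult_def matrix_vector_mult_def column_def)
  also have "(T *v column (q k) S) $ i = S $ i $ q k * d (q k)" for i k
    unfolding assms by (simp add: column_def)
  finally show ?thesis by (simp add: vec_eq_iff mult_mdiag_nth)
qed

lemma orthogonal_conj_mult_column:
  fixes V U0 :: "((real,'n::{finite,linorder}) vec,'n) vec"
  assumes V_inv: "invertible V" and orth: "orthogonal_matrix U0"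
  shows "(transpose U0 ** (V ** mdiag d ** matrix_inv V) ** U0) *v column j (transpose U0 ** V)
    = d j *\<^sub>R column j (transpose U0 ** V)"
proof -
  let ?M = "V ** mdiag d ** matrix_inv V"
  have "transpose U0 ** ?M ** U0 ** (transpose U0 ** V) = transpose U0 ** ?M ** (U0 ** transpose U0) ** V"
    by (simp add: matrix_mul_assoc)
  also have "U0 ** transpose U0 = mat 1" using orth by (simp add: orthogonal_matrix_def)
  finally have "(transpose U0 ** ?M ** U0) *v column j (transpose U0 ** V) = transpose U0 *v (?M *v column j V)"
    by (simp add: matrix_mul_assoc matrix_vector_mul_assoc flip: column_matrix_mult)
  also have "\<dots> = d j *\<^sub>R column j (transpose U0 ** V)"
    by (simp add: conj_mdiag_mult_column[OF V_inv] column_matrix_mult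
        matrix_vector_mult_scaleR del: transpose_matrix_vector)
  finally show ?thesis .
qed

lemma
  fixes R :: "((real,'n::{finite,linorder}) vec,'n) vec"
  assumes lower: "\<And>x. c * norm x \<le> norm (R *v x)" and "0 < c"
  shows invertible_of_lower_bound: "invertible R"
    and norm_matrix_inv_mult_vec_le: "norm (matrix_inv R *v y) \<le> (1 / c) * norm y"
proof -
  have "R *v x = 0 \<Longrightarrow> x = 0" for x
    using lower[of x] \<open>0 < c\<close> by (simp add: mult_le_0_iff)
  then show inv: "invertible R"
    by (simp add: invertible_left_inverse matrix_left_invertible_ker)
  show "norm (matrix_inv R *v y) \<le> (1 / c) * norm y"
    using lower[of "matrix_inv R *v y"] \<open>0 < c\<close>
    by (simp add: matrix_vector_mul_assoc matrix_inv_right[OF inv] field_simps)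
qed

lemma exact_jt_upper_similarity:
  fixes V U0 :: "((real,'n::{finite,linorder}) vec,'n) vec"
  assumes V_inv: "invertible V"
    and nondeg: "\<And>i i'. i \<noteq> i' \<Longrightarrow> \<exists>n\<in>{1..N}. Lam n i \<noteq> Lam n i'"
    and exact: "exact_jt N (\<lambda>n. V ** mdiag (Lam n) ** matrix_inv V) U0"
  obtains R q where "invertible R" "low R = 0" "low (matrix_inv R) = 0" "bij q"
    "\<And>x. norm (R *v x) \<le> sigma_max V * norm x"
    "\<And>x. norm (matrix_inv R *v x) \<le> (1 / sigma_min V) * norm x"
    "\<And>n. (transpose U0 ** (V ** mdiag (Lam n) ** matrix_inv V) ** U0) ** R
         = R ** mdiag (\<lambda>k. Lam n (q k))"
proof -
  define T where "T n = transpose U0 ** (V ** mdiag (Lam n) ** matrix_inv V) ** U0" for n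
  define S where "S = transpose U0 ** V"
  have orth: "orthogonal_matrix U0" and upper: "\<And>n. n \<in> {1..N} \<Longrightarrow> low (T n) = 0"
    using exact by (auto simp: exact_jt_def T_def)
  have S_inv: "invertible S"
    unfolding S_def
    using orth V_inv by (intro invertible_mult) (auto simp: orthogonal_matrix_def invertible_def)
  have eig: "T n *v column j S = Lam n j *\<^sub>R column j S" for n j
    unfolding T_def S_def by (rule orthogonal_conj_mult_column[OF V_inv orth])
  obtain q where q: "bij q" and R_upper: "low (\<chi> i k. S $ i $ q k) = 0"
    and R_diag: "\<And>k. S $ k $ q k \<noteq> 0"
    using upper_column_permutation_of_eigenbasis[OF S_inv upper eig nondeg] by blast
  define R where "R = (\<chi> i k. S $ i $ q k)"
  have norm_R: "norm (R *v x) = norm (V *v (\<chi> j. x $ inv q j))" for x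
    using orth by (simp add: R_def permute_columns_mult_vec[OF q] S_def norm_orthogonal_mult_vec
        del: transpose_matrix_vector flip: matrix_vector_mul_assoc)
  have R_ge: "sigma_min V * norm x \<le> norm (R *v x)" for x
    using sigma_min_le_norm_mult_vec[of V "\<chi> j. x $ inv q j"]
    by (simp add: norm_R norm_permute_vec[OF bij_imp_bij_inv[OF q]])
  note R_inv = invertible_of_lower_bound[OF R_ge sigma_min_pos[OF V_inv]]
  show ?thesis
  proof
    show "low R = 0" using R_upper by (simp add: R_def)
    moreover have "R $ k $ k \<noteq> 0" for k using R_diag by (simp add: R_def)
    ultimately show "low (matrix_inv R) = 0"
      by (intro upper_inverse_upper[OF matrix_inv_right[OF R_inv]])
    show "norm (R *v x) \<le> sigma_max V * norm x" for x
      using norm_mult_vec_le_sigma_max[of V "\<chi> j. x $ inv q j"]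
      by (simp add: norm_R norm_permute_vec[OF bij_imp_bij_inv[OF q]])
    show "(transpose U0 ** (V ** mdiag (Lam n) ** matrix_inv V) ** U0) ** R
        = R ** mdiag (\<lambda>k. Lam n (q k))" for n
      unfolding R_def T_def[symmetric] by (rule permute_columns_of_eigenbasis) (fact eig)
  qed (fact R_inv q norm_matrix_inv_mult_vec_le[OF R_ge sigma_min_pos[OF V_inv]])+
qed

section \<open>Lower bound on the commutators with the triangularized family\<close>

lemma norm_low_conj_upper_le:
  fixes R S Y :: "((real,'n::{finite,linorder}) vec,'n) vec"
  assumes "low R = 0" "low S = 0"
    and R: "\<And>x. norm (R *v x) \<le> a * norm x" and S: "\<And>x. norm (S *v x) \<le> b * norm x"
  shows "norm (low (R ** Y ** S)) \<le> a * b * norm (low Y)"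
proof -
  have "norm (low (R ** Y ** S)) \<le> norm (R ** low Y ** S)"
    using norm_low_le[of "R ** low Y ** S"] by (simp only: low_conj_upper[OF assms(1,2)])
  also have "\<dots> \<le> b * norm (R ** low Y)"
    by (rule norm_mult_le_of_operator_bound_right[OF S])
  also have "\<dots> \<le> b * (a * norm (low Y))"
    by (intro mult_left_mono norm_mult_le_of_operator_bound_left[OF R] operator_bound_nonneg[OF S])
  finally show ?thesis by (simp add: algebra_simps)
qed

lemma sum_norm_low_commutator_mdiag_ge:
  fixes d :: "nat \<Rightarrow> 'n::{finite,linorder} \<Rightarrow> real"
  assumes gap: "\<And>i j. i \<noteq> j \<Longrightarrow> g \<le> (\<Sum>n\<in>I. (d n i - d n j)\<^sup>2)"
  shows "g * (norm (low Z))\<^sup>2 \<le> (\<Sum>n\<in>I. (norm (low (commutator (mdiag (d n)) Z)))\<^sup>2)"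
proof -
  have "g * (norm (low Z))\<^sup>2 = (\<Sum>i\<in>UNIV. \<Sum>j\<in>UNIV. if j < i then g * (Z$i$j)\<^sup>2 else 0)"
    by (simp add: norm_low_sq sum_distrib_left if_distrib cong: if_cong)
  also have "\<dots> \<le> (\<Sum>i\<in>UNIV. \<Sum>j\<in>UNIV. \<Sum>n\<in>I. if j < i then ((d n i - d n j) * Z$i$j)\<^sup>2 else 0)"
  proof (intro sum_mono)
    fix i j :: 'n
    have "g * (Z$i$j)\<^sup>2 \<le> (\<Sum>n\<in>I. ((d n i - d n j) * Z$i$j)\<^sup>2)" if "j < i"
      using mult_right_mono[OF gap[of i j] zero_le_power2[of "Z$i$j"]] that
      by (simp add: sum_distrib_right power_mult_distrib)
    then show "(if j < i then g * (Z$i$j)\<^sup>2 else 0)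
        \<le> (\<Sum>n\<in>I. if j < i then ((d n i - d n j) * Z$i$j)\<^sup>2 else 0)"
      by simp
  qed
  also have "\<dots> = (\<Sum>i\<in>UNIV. \<Sum>n\<in>I. \<Sum>j\<in>UNIV. if j < i then ((d n i - d n j) * Z$i$j)\<^sup>2 else 0)"
    by (intro sum.cong refl) (rule sum.swap)
  also have "\<dots> = (\<Sum>n\<in>I. \<Sum>i\<in>UNIV. \<Sum>j\<in>UNIV. if j < i then ((d n i - d n j) * Z$i$j)\<^sup>2 else 0)"
    by (rule sum.swap)
  also have "\<dots> = (\<Sum>n\<in>I. (norm (low (commutator (mdiag (d n)) Z)))\<^sup>2)"
    by (simp only: norm_low_sq commutator_mdiag_nth)
  finally show ?thesis .
qed

lemma commutator_conj_similar:
  fixes R T D X :: "real^'n^'n"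
  assumes R: "invertible R" and similar: "T ** R = R ** D"
  shows "matrix_inv R ** commutator T X ** R = commutator D (matrix_inv R ** X ** R)"
proof -
  let ?Ri = "matrix_inv R"
  have "?Ri ** T = ?Ri ** (T ** R) ** ?Ri"
    by (simp add: matrix_inv_right[OF R] flip: matrix_mul_assoc)
  also have "\<dots> = D ** ?Ri"
    by (simp add: similar matrix_mul_assoc matrix_inv_left[OF R])
  finally have Ri_T: "?Ri ** T = D ** ?Ri" .
  have "?Ri ** commutator T X ** R = (?Ri ** T) ** X ** R - ?Ri ** X ** (T ** R)"
    by (simp add: commutator_def matrix_mult_distribs matrix_mul_assoc)
  also have "\<dots> = commutator D (?Ri ** X ** R)"
    by (simp add: Ri_T similar commutator_def matrix_mul_assoc)
  finally show ?thesis .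
qed

lemma commutator_lower_bound_of_upper_similarity:
  fixes R X :: "((real,'n::{finite,linorder}) vec,'n) vec"
    and T :: "nat \<Rightarrow> ((real,'n) vec,'n) vec" and d :: "nat \<Rightarrow> 'n \<Rightarrow> real"
  assumes R: "invertible R" "low R = 0" "low (matrix_inv R) = 0"
    and bounds: "\<And>x. norm (R *v x) \<le> a * norm x" "\<And>x. norm (matrix_inv R *v x) \<le> b * norm x"
    and similar: "\<And>n. T n ** R = R ** mdiag (d n)"
    and gap: "\<And>i j. i \<noteq> j \<Longrightarrow> g \<le> (\<Sum>n\<in>I. (d n i - d n j)\<^sup>2)" and "g \<ge> 0"
    and skew: "transpose X = - X" and nX: "norm X = 1"
  shows "g \<le> 2 * (a * b)^4 * (\<Sum>n\<in>I. (norm (low (commutator (T n) X)))\<^sup>2)"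
proof -
  let ?Ri = "matrix_inv R"
  define Z where "Z = ?Ri ** X ** R"
  have "R ** Z ** ?Ri = (R ** ?Ri) ** X ** (R ** ?Ri)"
    by (simp add: Z_def matrix_mul_assoc)
  then have "X = R ** Z ** ?Ri"
    by (simp add: matrix_inv_right[OF R(1)])
  then have "norm (low X) \<le> a * b * norm (low Z)"
    using norm_low_conj_upper_le[OF R(2,3) bounds] by simp
  then have "(norm (low X))\<^sup>2 \<le> (a * b * norm (low Z))\<^sup>2"
    by (rule power_mono) simp
  then have "1 \<le> 2 * ((a * b)\<^sup>2 * (norm (low Z))\<^sup>2)"
    using norm_skew_sq[OF skew] nX by (simp add: power_mult_distrib)
  have "commutator (mdiag (d n)) Z = ?Ri ** commutator (T n) X ** R" for n
    unfolding Z_def by (rule commutator_conj_similar[OF R(1) similar, symmetric])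
  then have "norm (low (commutator (mdiag (d n)) Z)) \<le> b * a * norm (low (commutator (T n) X))" for n
    using norm_low_conj_upper_le[OF R(3,2) bounds(2,1)] by simp
  then have "(\<Sum>n\<in>I. (norm (low (commutator (mdiag (d n)) Z)))\<^sup>2)
      \<le> (a * b)\<^sup>2 * (\<Sum>n\<in>I. (norm (low (commutator (T n) X)))\<^sup>2)"
    unfolding sum_distrib_left
    by (intro sum_mono) (simp add: power_mono power_mult_distrib[symmetric] mult.commute)
  then have lower_Z: "g * (norm (low Z))\<^sup>2 \<le> (a * b)\<^sup>2 * (\<Sum>n\<in>I. (norm (low (commutator (T n) X)))\<^sup>2)"
    using sum_norm_low_commutator_mdiag_ge[where d = d and Z = Z, OF gap] by linarith
  have "g \<le> g * (2 * ((a * b)\<^sup>2 * (norm (low Z))\<^sup>2))"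
    using mult_left_mono[OF \<open>1 \<le> 2 * ((a * b)\<^sup>2 * (norm (low Z))\<^sup>2)\<close> \<open>g \<ge> 0\<close>] by simp
  also have "\<dots> = 2 * (a * b)\<^sup>2 * (g * (norm (low Z))\<^sup>2)" by (simp add: algebra_simps)
  also have "\<dots> \<le> 2 * (a * b)\<^sup>2 * ((a * b)\<^sup>2 * (\<Sum>n\<in>I. (norm (low (commutator (T n) X)))\<^sup>2))"
    by (rule mult_left_mono[OF lower_Z]) simp
  also have "\<dots> = 2 * (a * b)^4 * (\<Sum>n\<in>I. (norm (low (commutator (T n) X)))\<^sup>2)"
    by (simp add: power4_eq_xxxx power2_eq_square mult_ac)
  finally show ?thesis .
qed

lemma exact_jt_commutator_lower_bound:
  fixes V U0 X :: "((real,'n::{finite,linorder}) vec,'n) vec"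
  assumes V_inv: "invertible V"
    and nondeg: "\<And>i i'. i \<noteq> i' \<Longrightarrow> \<exists>n\<in>{1..N}. Lam n i \<noteq> Lam n i'"
    and exact: "exact_jt N (\<lambda>n. V ** mdiag (Lam n) ** matrix_inv V) U0"
    and gap: "\<And>i i'. i \<noteq> i' \<Longrightarrow> g \<le> (\<Sum>n\<in>{1..N}. (Lam n i - Lam n i')\<^sup>2)" and "g \<ge> 0"
    and skew: "transpose X = - X" and nX: "norm X = 1"
  shows "g \<le> 2 * cond_num V ^ 4 * (\<Sum>n\<in>{1..N}.
    (norm (low (commutator (transpose U0 ** (V ** mdiag (Lam n) ** matrix_inv V) ** U0) X)))\<^sup>2)"
proof -
  obtain R q where R: "invertible R" "low R = 0" "low (matrix_inv R) = 0" "bij q"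
    and bounds: "\<And>x. norm (R *v x) \<le> sigma_max V * norm x"
      "\<And>x. norm (matrix_inv R *v x) \<le> (1 / sigma_min V) * norm x"
    and similar: "\<And>n. (transpose U0 ** (V ** mdiag (Lam n) ** matrix_inv V) ** U0) ** R
      = R ** mdiag (\<lambda>k. Lam n (q k))"
    using exact_jt_upper_similarity[OF V_inv nondeg exact] by blast
  have "g \<le> (\<Sum>n\<in>{1..N}. (Lam n (q i) - Lam n (q j))\<^sup>2)" if "i \<noteq> j" for i j
    using gap bij_is_inj[OF R(4)] that by (simp add: inj_eq)
  from commutator_lower_bound_of_upper_similarity[OF R(1-3) bounds similar this \<open>g \<ge> 0\<close> skew nX]
  show ?thesis by (simp add: cond_num_def)
qed

section \<open>First-order condition at an approximate joint triangularizer\<close>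

lemma has_real_derivative_at_0_of_quadratic_bound:
  fixes f :: "real \<Rightarrow> real"
  assumes bound: "\<And>t. \<bar>t\<bar> \<le> 1 \<Longrightarrow> \<bar>f t - f 0 - G * t\<bar> \<le> K * t\<^sup>2"
  shows "(f has_real_derivative G) (at 0)"
  unfolding has_field_derivative_iff LIM_eq
proof (intro allI impI)
  fix r :: real assume "r > 0"
  have "K \<ge> 0" using bound[of 1] by simp
  define s where "s = min 1 (r / (K + 1))"
  have "\<bar>(f x - f 0) / x - G\<bar> < r" if "x \<noteq> 0" "\<bar>x\<bar> < s" for x
  proof -
    have "\<bar>(f x - f 0) / x - G\<bar> = \<bar>f x - f 0 - G * x\<bar> / \<bar>x\<bar>"
      using that(1) by (simp add: field_simps flip: abs_divide)
    also have "\<dots> \<le> K * x\<^sup>2 / \<bar>x\<bar>"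
      using bound[of x] that(2) by (intro divide_right_mono) (auto simp: s_def)
    also have "\<dots> = K * \<bar>x\<bar>"
      using that(1) by (simp add: divide_eq_eq power2_eq_square abs_mult_self_eq mult.assoc)
    also have "\<dots> \<le> (K + 1) * \<bar>x\<bar>" by (simp add: mult_right_mono)
    also have "\<dots> < (K + 1) * (r / (K + 1))"
      using that(2) \<open>K \<ge> 0\<close> by (intro mult_strict_left_mono) (auto simp: s_def)
    also have "\<dots> = r" using \<open>K \<ge> 0\<close> by simp
    finally show ?thesis .
  qed
  moreover have "s > 0" using \<open>r > 0\<close> \<open>K \<ge> 0\<close> by (simp add: s_def)
  ultimately show "\<exists>s>0. \<forall>x. x \<noteq> 0 \<and> norm (x - 0) < s \<longrightarrow> norm ((f x - f 0) / (x - 0) - G) < r"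
    by auto
qed

lemma norm_sq_first_order_expansion:
  fixes a c r :: "'a::real_inner"
  assumes "\<bar>t\<bar> \<le> 1" "norm r \<le> K * t\<^sup>2" "K \<ge> 0"
  shows "\<bar>(norm (a + t *\<^sub>R c + r))\<^sup>2 - (norm a)\<^sup>2 - t * (2 * inner a c)\<bar>
     \<le> ((norm c)\<^sup>2 + 2 * norm a * K + 2 * norm c * K + K\<^sup>2) * t\<^sup>2"
proof -
  have t2: "t\<^sup>2 \<le> 1" using assms(1) by (simp add: abs_square_le_1)
  have r2: "(norm r)\<^sup>2 \<le> K\<^sup>2 * t\<^sup>2"
  proof -
    have "(norm r)\<^sup>2 \<le> (K * t\<^sup>2)\<^sup>2" by (rule power_mono[OF assms(2)]) simp
    also have "\<dots> = K\<^sup>2 * t\<^sup>2 * t\<^sup>2" by (simp add: power2_eq_square)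
    also have "\<dots> \<le> K\<^sup>2 * t\<^sup>2" using t2 by (simp add: mult_left_le)
    finally show ?thesis .
  qed
  have ar: "\<bar>inner a r\<bar> \<le> norm a * (K * t\<^sup>2)"
    using Cauchy_Schwarz_ineq2[of a r] mult_left_mono[OF assms(2) norm_ge_zero[of a]] by linarith
  have cr: "\<bar>t\<bar> * \<bar>inner c r\<bar> \<le> norm c * (K * t\<^sup>2)"
  proof -
    have "\<bar>inner c r\<bar> \<le> norm c * (K * t\<^sup>2)"
      using Cauchy_Schwarz_ineq2[of c r] mult_left_mono[OF assms(2) norm_ge_zero[of c]] by linarith
    then show ?thesis using assms(1) mult_left_le_one_le[of "\<bar>inner c r\<bar>" "\<bar>t\<bar>"] by simp
  qed
  have "(norm (a + t *\<^sub>R c + r))\<^sup>2 - (norm a)\<^sup>2 - t * (2 * inner a c)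
     = t\<^sup>2 * (norm c)\<^sup>2 + (norm r)\<^sup>2 + 2 * inner a r + 2 * t * inner c r"
    unfolding power2_norm_eq_inner
    by (simp add: inner_add_left inner_add_right inner_commute[of c a] inner_commute[of r a]
        inner_commute[of r c] power2_eq_square algebra_simps)
  also have "\<bar>\<dots>\<bar> \<le> t\<^sup>2 * (norm c)\<^sup>2 + (norm r)\<^sup>2 + 2 * \<bar>inner a r\<bar> + 2 * (\<bar>t\<bar> * \<bar>inner c r\<bar>)"
  proof -
    have "\<bar>2 * inner a r\<bar> = 2 * \<bar>inner a r\<bar>" "\<bar>2 * t * inner c r\<bar> = 2 * (\<bar>t\<bar> * \<bar>inner c r\<bar>)"
      by (simp_all add: abs_mult)
    moreover have "t\<^sup>2 * (norm c)\<^sup>2 \<ge> 0" "(norm r)\<^sup>2 \<ge> 0" by simp_all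
    ultimately show ?thesis by linarith
  qed
  also have "\<dots> \<le> ((norm c)\<^sup>2 + 2 * norm a * K + 2 * norm c * K + K\<^sup>2) * t\<^sup>2"
    using r2 ar cr by (simp add: algebra_simps)
  finally show ?thesis .
qed

lemma norm_low_congruence_sq_expansion:
  assumes skew: "transpose X = - X" and nX: "norm X = 1" and t1: "\<bar>t\<bar> \<le> 1"
  shows "\<bar>(norm (low (transpose (mat_exp (t *\<^sub>R X)) ** A ** mat_exp (t *\<^sub>R X))))\<^sup>2
      - (norm (low A))\<^sup>2 - t * (2 * inner (low A) (low (commutator A X)))\<bar>
    \<le> ((norm (low (commutator A X)))\<^sup>2 + 2 * norm (low A) * (6 * norm A)
      + 2 * norm (low (commutator A X)) * (6 * norm A) + (6 * norm A)\<^sup>2) * t\<^sup>2"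
proof -
  obtain Rt where eq: "transpose (mat_exp (t *\<^sub>R X)) ** A ** mat_exp (t *\<^sub>R X)
      = A + t *\<^sub>R commutator A X + Rt"
    and "norm Rt \<le> 6 * t\<^sup>2 * norm A"
    using congruence_mat_exp_expansion[OF skew nX t1] .
  then have "norm (low Rt) \<le> (6 * norm A) * t\<^sup>2"
    using norm_low_le[of Rt] by (simp add: algebra_simps)
  from norm_sq_first_order_expansion[OF t1 this]
  show ?thesis by (simp add: eq low_add low_scaleR)
qed

lemma approx_jt_first_order_condition:
  fixes U X :: "((real,'n::{finite,linorder}) vec,'n) vec"
  assumes approx: "approx_jt N Mh U" and skew: "transpose X = - X" and nX: "norm X = 1"
  shows "(\<Sum>n\<in>{1..N}. inner (low (transpose U ** Mh n ** U))
    (low (commutator (transpose U ** Mh n ** U) X))) = 0"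
proof -
  define A where "A n = transpose U ** Mh n ** U" for n
  define f where "f t = jt_obj N Mh (U ** mat_exp (t *\<^sub>R X))" for t
  define G where "G = (\<Sum>n\<in>{1..N}. 2 * inner (low (A n)) (low (commutator (A n) X)))"
  define K where "K n = (norm (low (commutator (A n) X)))\<^sup>2 + 2 * norm (low (A n)) * (6 * norm (A n))
    + 2 * norm (low (commutator (A n) X)) * (6 * norm (A n)) + (6 * norm (A n))\<^sup>2" for n
  have f: "f t = (\<Sum>n\<in>{1..N}.
      (norm (low (transpose (mat_exp (t *\<^sub>R X)) ** A n ** mat_exp (t *\<^sub>R X))))\<^sup>2)" for t
    by (simp add: f_def jt_obj_def A_def matrix_transpose_mul matrix_mul_assoc)
  have "\<bar>f t - f 0 - G * t\<bar> \<le> (\<Sum>n\<in>{1..N}. K n) * t\<^sup>2" if "\<bar>t\<bar> \<le> 1" for t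
  proof -
    have "\<bar>f t - f 0 - G * t\<bar> = \<bar>\<Sum>n\<in>{1..N}.
        (norm (low (transpose (mat_exp (t *\<^sub>R X)) ** A n ** mat_exp (t *\<^sub>R X))))\<^sup>2
        - (norm (low (A n)))\<^sup>2 - t * (2 * inner (low (A n)) (low (commutator (A n) X)))\<bar>"
      by (simp add: f mat_exp_zero G_def sum_subtractf sum_distrib_left mult.commute)
    also have "\<dots> \<le> (\<Sum>n\<in>{1..N}. K n * t\<^sup>2)"
      unfolding K_def
      by (rule order_trans[OF sum_abs sum_mono]) (rule norm_low_congruence_sq_expansion[OF skew nX that])
    finally show ?thesis by (simp add: sum_distrib_right)
  qed
  then have "(f has_real_derivative G) (at 0)"
    by (rule has_real_derivative_at_0_of_quadratic_bound)
  moreover have "(f has_real_derivative 0) (at 0)"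
    using approx skew by (simp add: approx_jt_def f_def[abs_def])
  ultimately have "G = 0" by (rule DERIV_unique)
  then show ?thesis by (simp add: G_def A_def flip: sum_distrib_left)
qed

section \<open>Perturbation of the first-order condition\<close>

lemma inner_low_commutator_perturbation:
  fixes T F X \<rho> :: "((real,'n::{finite,linorder}) vec,'n) vec" and \<sigma> \<alpha> :: real
  assumes "low T = 0" "norm X = 1"
  defines "\<Delta> \<equiv> \<sigma> *\<^sub>R F + \<alpha> *\<^sub>R commutator T X + \<rho>"
  shows "\<bar>inner (low (T + \<Delta>)) (low (commutator (T + \<Delta>) X)) - \<alpha> * (norm (low (commutator T X)))\<^sup>2
      - \<sigma> * inner (low F) (low (commutator T X))\<bar> \<le> norm \<rho> * (2 * norm T) + 2 * (norm \<Delta>)\<^sup>2"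
proof -
  define L where "L = low (commutator T X)"
  define S where "S = low (commutator \<Delta> X)"
  have "inner (low (T + \<Delta>)) (low (commutator (T + \<Delta>) X))
      = \<sigma> * inner (low F) L + \<alpha> * (norm L)\<^sup>2 + inner (low \<rho>) L + inner (low \<Delta>) S"
  proof -
    have "low (T + \<Delta>) = low \<Delta>" "commutator (T + \<Delta>) X = commutator T X + commutator \<Delta> X"
      using assms(1) by (simp_all add: low_add commutator_def matrix_mult_distribs)
    moreover have "low \<Delta> = \<sigma> *\<^sub>R low F + \<alpha> *\<^sub>R L + low \<rho>"
      by (simp add: \<Delta>_def L_def low_add low_scaleR)
    ultimately show ?thesis
      by (simp add: L_def S_def low_add inner_add_left inner_add_right power2_norm_eq_inner)
  qed
  moreover have "\<bar>inner (low \<rho>) L\<bar> \<le> norm \<rho> * (2 * norm T)"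
  proof -
    have "norm L \<le> 2 * norm T"
      using norm_low_le[of "commutator T X"] norm_commutator_le[of T X] assms(2) by (simp add: L_def)
    then have "norm (low \<rho>) * norm L \<le> norm \<rho> * (2 * norm T)"
      using norm_low_le[of \<rho>] by (intro mult_mono) auto
    then show ?thesis
      using Cauchy_Schwarz_ineq2[of "low \<rho>" L] by linarith
  qed
  moreover have "\<bar>inner (low \<Delta>) S\<bar> \<le> 2 * (norm \<Delta>)\<^sup>2"
  proof -
    have "norm S \<le> 2 * norm \<Delta>"
      using norm_low_le[of "commutator \<Delta> X"] norm_commutator_le[of \<Delta> X] assms(2) by (simp add: S_def)
    then have "norm (low \<Delta>) * norm S \<le> norm \<Delta> * (2 * norm \<Delta>)"
      using norm_low_le[of \<Delta>] by (intro mult_mono) auto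
    then show ?thesis
      using Cauchy_Schwarz_ineq2[of "low \<Delta>" S] by (simp add: power2_eq_square)
  qed
  ultimately show ?thesis by (simp add: L_def)
qed

lemma perturbed_congruence_expansion:
  assumes skew: "transpose X = - X" and nX: "norm X = 1"
    and "0 < \<alpha>" "0 \<le> \<sigma>" "\<alpha> + \<sigma> \<le> 1" and nT: "norm T \<le> m" and nF: "norm F \<le> 1"
  obtains \<rho> where "transpose (mat_exp (\<alpha> *\<^sub>R X)) ** (T + \<sigma> *\<^sub>R F) ** mat_exp (\<alpha> *\<^sub>R X)
      = T + (\<sigma> *\<^sub>R F + \<alpha> *\<^sub>R commutator T X + \<rho>)"
    and "norm \<rho> \<le> (6 * m + 8) * (\<alpha> + \<sigma>)\<^sup>2"
proof -
  let ?H = "T + \<sigma> *\<^sub>R F"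
  have "\<bar>\<alpha>\<bar> \<le> 1" using assms by simp
  then obtain Ra where expansion: "transpose (mat_exp (\<alpha> *\<^sub>R X)) ** ?H ** mat_exp (\<alpha> *\<^sub>R X)
      = ?H + \<alpha> *\<^sub>R commutator ?H X + Ra" and nRa: "norm Ra \<le> 6 * \<alpha>\<^sup>2 * norm ?H"
    using congruence_mat_exp_expansion[OF skew nX] by blast
  define \<rho> where "\<rho> = (\<alpha> * \<sigma>) *\<^sub>R commutator F X + Ra"
  have "commutator ?H X = commutator T X + \<sigma> *\<^sub>R commutator F X"
    by (simp add: commutator_def matrix_mult_distribs algebra_simps)
  then have "transpose (mat_exp (\<alpha> *\<^sub>R X)) ** ?H ** mat_exp (\<alpha> *\<^sub>R X)
      = T + (\<sigma> *\<^sub>R F + \<alpha> *\<^sub>R commutator T X + \<rho>)"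
    by (simp add: expansion \<rho>_def algebra_simps)
  moreover have "norm \<rho> \<le> (6 * m + 8) * (\<alpha> + \<sigma>)\<^sup>2"
  proof -
    have "norm ?H \<le> m + 1"
      using norm_triangle_ineq[of T "\<sigma> *\<^sub>R F"] nT nF \<open>0 \<le> \<sigma>\<close> \<open>\<alpha> + \<sigma> \<le> 1\<close> \<open>0 < \<alpha>\<close>
        mult_left_le_one_le[of "norm F" \<sigma>] by simp
    moreover have "\<alpha>\<^sup>2 \<le> (\<alpha> + \<sigma>)\<^sup>2"
      using \<open>0 < \<alpha>\<close> \<open>0 \<le> \<sigma>\<close> by (intro power_mono) auto
    ultimately have "norm Ra \<le> 6 * (m + 1) * (\<alpha> + \<sigma>)\<^sup>2"
      using nRa mult_mono[of "\<alpha>\<^sup>2" "(\<alpha> + \<sigma>)\<^sup>2" "norm ?H" "m + 1"]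
      by (simp add: algebra_simps)
    moreover have "norm ((\<alpha> * \<sigma>) *\<^sub>R commutator F X) \<le> 2 * (\<alpha> + \<sigma>)\<^sup>2"
    proof -
      have "norm (commutator F X) \<le> 2" using norm_commutator_le[of F X] nX nF by simp
      then have "norm ((\<alpha> * \<sigma>) *\<^sub>R commutator F X) \<le> (\<alpha> * \<sigma>) * 2"
        using \<open>0 < \<alpha>\<close> \<open>0 \<le> \<sigma>\<close> by (simp add: mult_left_mono)
      also have "\<dots> \<le> 2 * (\<alpha> + \<sigma>)\<^sup>2"
        using \<open>0 < \<alpha>\<close> \<open>0 \<le> \<sigma>\<close> by (simp add: power2_eq_square algebra_simps)
      finally show ?thesis .
    qed
    ultimately show ?thesis
      using norm_triangle_ineq[of "(\<alpha> * \<sigma>) *\<^sub>R commutator F X" Ra] by (simp add: \<rho>_def algebra_simps)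
  qed
  ultimately show ?thesis by (rule that)
qed

definition stationarity_remainder :: "real \<Rightarrow> real" where
  "stationarity_remainder m = 2 * m * (6 * m + 8) + 2 * (8 * m + 9)\<^sup>2"

lemma stationarity_term_expansion:
  assumes lowT: "low T = 0" and skew: "transpose X = - X" and nX: "norm X = 1"
    and \<alpha>: "0 < \<alpha>" and \<sigma>: "0 \<le> \<sigma>" "\<alpha> + \<sigma> \<le> 1" and nT: "norm T \<le> m" and nF: "norm F \<le> 1"
    and A: "A = transpose (mat_exp (\<alpha> *\<^sub>R X)) ** (T + \<sigma> *\<^sub>R F) ** mat_exp (\<alpha> *\<^sub>R X)"
  shows "\<bar>inner (low A) (low (commutator A X)) - \<alpha> * (norm (low (commutator T X)))\<^sup>2
      - \<sigma> * inner (low F) (low (commutator T X))\<bar> \<le> stationarity_remainder m * (\<alpha> + \<sigma>)\<^sup>2"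
proof -
  define e where "e = \<alpha> + \<sigma>"
  have "m \<ge> 0" using nT norm_ge_zero[of T] by linarith
  have e: "0 \<le> e" "e \<le> 1" "\<alpha> \<le> e" "\<sigma> \<le> e" using \<alpha> \<sigma> by (auto simp: e_def)
  obtain \<rho> where A_eq: "A = T + (\<sigma> *\<^sub>R F + \<alpha> *\<^sub>R commutator T X + \<rho>)"
    and n\<rho>: "norm \<rho> \<le> (6 * m + 8) * e\<^sup>2"
    using perturbed_congruence_expansion[OF skew nX \<alpha> \<sigma> nT nF] A by (auto simp: e_def)
  have "norm (\<alpha> *\<^sub>R commutator T X) \<le> \<alpha> * (2 * m)"
    using norm_commutator_le[of T X] nX nT \<alpha> by (simp add: mult_left_mono)
  moreover have "norm (\<sigma> *\<^sub>R F) \<le> \<sigma>"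
    using mult_left_mono[OF nF \<sigma>(1)] \<sigma>(1) by simp
  ultimately have "norm (\<sigma> *\<^sub>R F + \<alpha> *\<^sub>R commutator T X + \<rho>) \<le> \<sigma> + \<alpha> * (2 * m) + (6 * m + 8) * e\<^sup>2"
    using norm_triangle_ineq[of "\<sigma> *\<^sub>R F + \<alpha> *\<^sub>R commutator T X" \<rho>]
      norm_triangle_ineq[of "\<sigma> *\<^sub>R F" "\<alpha> *\<^sub>R commutator T X"] n\<rho>
    by linarith
  also have "\<dots> \<le> (8 * m + 9) * e"
  proof -
    have "e\<^sup>2 \<le> e" using e by (simp add: power2_eq_square mult_left_le_one_le)
    then have "(6 * m + 8) * e\<^sup>2 \<le> (6 * m + 8) * e" using \<open>m \<ge> 0\<close> by (intro mult_left_mono) auto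
    moreover have "\<alpha> * (2 * m) \<le> e * (2 * m)" using e \<open>m \<ge> 0\<close> by (intro mult_right_mono) auto
    ultimately show ?thesis using e by (simp add: algebra_simps)
  qed
  finally have "(norm (\<sigma> *\<^sub>R F + \<alpha> *\<^sub>R commutator T X + \<rho>))\<^sup>2 \<le> (8 * m + 9)\<^sup>2 * e\<^sup>2"
    using power_mono[of _ "(8 * m + 9) * e" 2] by (simp add: power_mult_distrib)
  moreover have "norm \<rho> * (2 * norm T) \<le> 2 * m * (6 * m + 8) * e\<^sup>2"
    using mult_mono[OF n\<rho> nT] \<open>m \<ge> 0\<close> by (simp add: algebra_simps)
  ultimately show ?thesis
    using inner_low_commutator_perturbation[OF lowT nX, of \<sigma> F \<alpha> \<rho>]
    by (simp add: A_eq stationarity_remainder_def e_def algebra_simps)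
qed

lemma neg_sum_inner_le_sqrt_sum_sq:
  fixes G L :: "'i \<Rightarrow> 'a::real_inner" and w :: "'i \<Rightarrow> real"
  assumes "\<And>n. n \<in> I \<Longrightarrow> norm (G n) \<le> w n"
  shows "- (\<Sum>n\<in>I. inner (G n) (L n)) \<le> sqrt (\<Sum>n\<in>I. (w n)\<^sup>2) * sqrt (\<Sum>n\<in>I. (norm (L n))\<^sup>2)"
proof -
  have "- (\<Sum>n\<in>I. inner (G n) (L n)) \<le> (\<Sum>n\<in>I. \<bar>w n\<bar> * \<bar>norm (L n)\<bar>)"
    unfolding sum_negf[symmetric]
  proof (rule sum_mono)
    fix n assume "n \<in> I"
    have "- inner (G n) (L n) \<le> norm (G n) * norm (L n)"
      using Cauchy_Schwarz_ineq2[of "G n" "L n"] by linarith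
    also have "\<dots> \<le> \<bar>w n\<bar> * norm (L n)"
      using assms[OF \<open>n \<in> I\<close>] by (intro mult_right_mono) auto
    finally show "- inner (G n) (L n) \<le> \<bar>w n\<bar> * \<bar>norm (L n)\<bar>" by simp
  qed
  also have "\<dots> \<le> sqrt (\<Sum>n\<in>I. (w n)\<^sup>2) * sqrt (\<Sum>n\<in>I. (norm (L n))\<^sup>2)"
    using L2_set_mult_ineq[where A = I and f = w and g = "\<lambda>n. norm (L n)"] by (simp add: L2_set_def)
  finally show ?thesis .
qed

lemma sum_le_of_approx_sum_zero:
  fixes x y :: "'i \<Rightarrow> real"
  assumes "(\<Sum>n\<in>I. x n) = 0" "\<And>n. n \<in> I \<Longrightarrow> \<bar>x n - y n\<bar> \<le> c"
  shows "(\<Sum>n\<in>I. y n) \<le> real (card I) * c"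
proof -
  have "(\<Sum>n\<in>I. y n) = (\<Sum>n\<in>I. y n - x n)" using assms(1) by (simp add: sum_subtractf)
  also have "\<dots> \<le> (\<Sum>n\<in>I. c)" using assms(2) by (intro sum_mono) (simp add: abs_le_iff)
  finally show ?thesis by simp
qed

lemma approx_jt_balance:
  fixes M W :: "nat \<Rightarrow> ((real,'n::{finite,linorder}) vec,'n) vec" and U0 X :: "((real,'n) vec,'n) vec"
  assumes approx: "approx_jt N (\<lambda>n. M n + \<sigma> *\<^sub>R W n) (U0 ** mat_exp (\<alpha> *\<^sub>R X))"
    and orth: "orthogonal_matrix U0"
    and upper: "\<And>n. n \<in> {1..N} \<Longrightarrow> low (transpose U0 ** M n ** U0) = 0"
    and nM: "\<And>n. n \<in> {1..N} \<Longrightarrow> norm (M n) \<le> m"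
    and nW: "\<And>n. n \<in> {1..N} \<Longrightarrow> norm (W n) \<le> 1"
    and skew: "transpose X = - X" and nX: "norm X = 1"
    and \<alpha>: "0 < \<alpha>" and \<sigma>: "0 \<le> \<sigma>" "\<alpha> + \<sigma> \<le> 1"
  defines "L \<equiv> \<lambda>n. low (commutator (transpose U0 ** M n ** U0) X)"
  shows "\<alpha> * (\<Sum>n\<in>{1..N}. (norm (L n))\<^sup>2)
    \<le> \<sigma> * sqrt (\<Sum>n\<in>{1..N}. (norm (W n))\<^sup>2) * sqrt (\<Sum>n\<in>{1..N}. (norm (L n))\<^sup>2)
      + real N * stationarity_remainder m * (\<alpha> + \<sigma>)\<^sup>2"
proof -
  define F where "F n = transpose U0 ** W n ** U0" for n
  define A where "A n = transpose (U0 ** mat_exp (\<alpha> *\<^sub>R X)) ** (M n + \<sigma> *\<^sub>R W n)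
    ** (U0 ** mat_exp (\<alpha> *\<^sub>R X))" for n
  have "A n = transpose (mat_exp (\<alpha> *\<^sub>R X)) ** (transpose U0 ** M n ** U0 + \<sigma> *\<^sub>R F n)
      ** mat_exp (\<alpha> *\<^sub>R X)" for n
    by (simp add: A_def F_def matrix_transpose_mul matrix_mult_distribs matrix_mul_assoc)
  moreover have "norm (transpose U0 ** M n ** U0) \<le> m" "norm (F n) \<le> 1" if "n \<in> {1..N}" for n
    using norm_orthogonal_conj_le[OF orth, of "M n"] norm_orthogonal_conj_le[OF orth, of "W n"]
      nM[OF that] nW[OF that] by (simp_all add: F_def)
  ultimately have "\<bar>inner (low (A n)) (low (commutator (A n) X))
      - (\<alpha> * (norm (L n))\<^sup>2 + \<sigma> * inner (low (F n)) (L n))\<bar> \<le> stationarity_remainder m * (\<alpha> + \<sigma>)\<^sup>2"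
    if "n \<in> {1..N}" for n
    using stationarity_term_expansion[OF upper[OF that] skew nX \<alpha> \<sigma>] that
    by (simp add: L_def algebra_simps)
  moreover have "(\<Sum>n\<in>{1..N}. inner (low (A n)) (low (commutator (A n) X))) = 0"
    using approx_jt_first_order_condition[OF approx skew nX] by (simp add: A_def)
  ultimately have "(\<Sum>n\<in>{1..N}. \<alpha> * (norm (L n))\<^sup>2 + \<sigma> * inner (low (F n)) (L n))
      \<le> real (card {1..N}) * (stationarity_remainder m * (\<alpha> + \<sigma>)\<^sup>2)"
    by (intro sum_le_of_approx_sum_zero) auto
  moreover have "- (\<Sum>n\<in>{1..N}. inner (low (F n)) (L n))
      \<le> sqrt (\<Sum>n\<in>{1..N}. (norm (W n))\<^sup>2) * sqrt (\<Sum>n\<in>{1..N}. (norm (L n))\<^sup>2)"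
    using norm_low_le[of "F _"] norm_orthogonal_conj_le[OF orth]
    by (intro neg_sum_inner_le_sqrt_sum_sq) (auto simp: F_def intro: order_trans)
  then have "\<sigma> * - (\<Sum>n\<in>{1..N}. inner (low (F n)) (L n))
      \<le> \<sigma> * (sqrt (\<Sum>n\<in>{1..N}. (norm (W n))\<^sup>2) * sqrt (\<Sum>n\<in>{1..N}. (norm (L n))\<^sup>2))"
    using \<sigma>(1) by (rule mult_left_mono)
  ultimately show ?thesis by (simp add: sum.distrib sum_distrib_left algebra_simps)
qed

lemma quadratic_balance_bound:
  fixes \<alpha> \<sigma> s w C e h :: real
  assumes balance: "\<alpha> * s\<^sup>2 \<le> \<sigma> * w * s + C * e\<^sup>2" and h: "0 < h" "h \<le> s\<^sup>2"
    and nonneg: "0 \<le> s" "0 \<le> \<sigma>" "0 \<le> w" "0 \<le> C"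
  shows "\<alpha> \<le> \<sigma> * w / sqrt h + C / h * e\<^sup>2"
proof -
  have "0 < s" using h nonneg(1) by (auto simp: less_le)
  have "\<alpha> \<le> \<sigma> * w / s + C * e\<^sup>2 / s\<^sup>2"
    using balance \<open>0 < s\<close> by (simp add: field_simps power2_eq_square)
  also have "\<sigma> * w / s \<le> \<sigma> * w / sqrt h"
    using h nonneg real_sqrt_le_mono[OF h(2)] \<open>0 < s\<close> by (intro divide_left_mono) auto
  also have "C * e\<^sup>2 / s\<^sup>2 \<le> C / h * e\<^sup>2"
  proof -
    have "0 < s\<^sup>2 * h" using h \<open>0 < s\<close> by simp
    then have "C / s\<^sup>2 \<le> C / h" using h nonneg by (intro divide_left_mono) auto
    then have "C / s\<^sup>2 * e\<^sup>2 \<le> C / h * e\<^sup>2" by (rule mult_right_mono) simp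
    then show ?thesis by simp
  qed
  finally show ?thesis by simp
qed

lemma Min_pairs_le:
  fixes g :: "'n::{finite,linorder} \<Rightarrow> 'n \<Rightarrow> real"
  assumes sym: "\<And>i j. g i j = g j i" and "i \<noteq> j"
  shows "Min {g i i' | i i'. i < i'} \<le> g i j"
proof -
  have fin: "finite {g i i' | i i'. i < i'}"
    by (rule finite_subset[of _ "(\<lambda>(i, i'). g i i') ` UNIV"]) auto
  consider "i < j" | "j < i" using \<open>i \<noteq> j\<close> by fastforce
  then show ?thesis
    by cases (use sym in \<open>auto intro!: Min_le[OF fin]\<close>)
qed

lemma Min_pairs_pos:
  fixes g :: "'n::{finite,linorder} \<Rightarrow> 'n \<Rightarrow> real"
  assumes pos: "\<And>i j. i \<noteq> j \<Longrightarrow> 0 < g i j" and "2 \<le> CARD('n)"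
  shows "0 < Min {g i i' | i i'. i < i'}"
proof -
  have fin: "finite {g i i' | i i'. i < i'}"
    by (rule finite_subset[of _ "(\<lambda>(i, i'). g i i') ` UNIV"]) auto
  obtain i j :: 'n where "i \<noteq> j"
    using \<open>2 \<le> CARD('n)\<close> card_le_Suc0_iff_eq[of "UNIV :: 'n set"] by auto
  then have "{g i i' | i i'. i < i'} \<noteq> {}"
    by (cases i j rule: linorder_cases) auto
  with fin show ?thesis
    using pos by (auto simp: Min_gr_iff)
qed

lemma skew_unit_card_ge_2:
  fixes X :: "((real,'n::finite) vec,'n) vec"
  assumes "transpose X = - X" "norm X = 1"
  shows "2 \<le> CARD('n)"
proof (rule ccontr)
  assume "\<not> 2 \<le> CARD('n)"
  then have "i = j" for i j :: 'n
    using card_le_Suc0_iff_eq[of "UNIV :: 'n set"] by auto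
  moreover have "X $ i $ i = 0" for i
    using arg_cong[OF assms(1), of "\<lambda>A. A $ i $ i"] by (simp add: transpose_def)
  ultimately have "X = 0" by (metis vec_eq_iff zero_index)
  then show False using assms(2) by simp
qed

lemma sum_sq_eigenvalue_diff_le:
  fixes V :: "((real,'n::{finite,linorder}) vec,'n) vec"
  assumes "invertible V"
  shows "(\<Sum>n\<in>I. (Lam n i - Lam n j)\<^sup>2) \<le> 4 * (\<Sum>n\<in>I. (norm (V ** mdiag (Lam n) ** matrix_inv V))\<^sup>2)"
  unfolding sum_distrib_left
proof (rule sum_mono)
  fix n
  have "\<bar>Lam n i - Lam n j\<bar> \<le> 2 * norm (V ** mdiag (Lam n) ** matrix_inv V)"
    using eigenvalue_le_norm_conj_mdiag[OF assms, of "Lam n" i]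
      eigenvalue_le_norm_conj_mdiag[OF assms, of "Lam n" j] by linarith
  from power_mono[OF this abs_ge_zero, of 2]
  show "(Lam n i - Lam n j)\<^sup>2 \<le> 4 * (norm (V ** mdiag (Lam n) ** matrix_inv V))\<^sup>2"
    by (simp add: power_mult_distrib)
qed

lemma eigenvalue_gap_properties:
  fixes V :: "((real,'n::{finite,linorder}) vec,'n) vec" and Lam :: "nat \<Rightarrow> 'n \<Rightarrow> real"
  assumes V_inv: "invertible V"
    and nondeg: "\<And>i i'. i \<noteq> i' \<Longrightarrow> \<exists>n\<in>{1..N}. Lam n i \<noteq> Lam n i'"
    and card: "2 \<le> CARD('n)"
  defines "\<gamma> \<equiv> Min {(\<Sum>n\<in>{1..N}. (Lam n i - Lam n i')\<^sup>2) | i i'. i < i'}"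
  shows "\<And>i i'. i \<noteq> i' \<Longrightarrow> \<gamma> \<le> (\<Sum>n\<in>{1..N}. (Lam n i - Lam n i')\<^sup>2)"
    and "0 < \<gamma>"
    and "\<gamma> \<le> 4 * (\<Sum>n\<in>{1..N}. (norm (V ** mdiag (Lam n) ** matrix_inv V))\<^sup>2)"
proof -
  show gap: "\<gamma> \<le> (\<Sum>n\<in>{1..N}. (Lam n i - Lam n i')\<^sup>2)" if "i \<noteq> i'" for i i'
    unfolding \<gamma>_def using that by (intro Min_pairs_le) (simp_all add: power2_commute)
  have "0 < (\<Sum>n\<in>{1..N}. (Lam n i - Lam n i')\<^sup>2)" if "i \<noteq> i'" for i i'
    using nondeg[OF that] by (auto intro: sum_pos2)
  then show "0 < \<gamma>"
    unfolding \<gamma>_def using card by (rule Min_pairs_pos)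
  obtain i i' :: 'n where "i \<noteq> i'"
    using card card_le_Suc0_iff_eq[of "UNIV :: 'n set"] by auto
  from order_trans[OF gap[OF this] sum_sq_eigenvalue_diff_le[OF V_inv]]
  show "\<gamma> \<le> 4 * (\<Sum>n\<in>{1..N}. (norm (V ** mdiag (Lam n) ** matrix_inv V))\<^sup>2)" .
qed

lemma inverse_sqrt_gap_le:
  fixes \<gamma> S \<kappa> :: real
  assumes "0 < \<gamma>" "\<gamma> \<le> 4 * S" "2 \<le> CARD('n::finite)" "1 \<le> \<kappa>"
  shows "1 / sqrt (\<gamma> / (2 * \<kappa> ^ 4)) \<le> 2 * sqrt (real (CARD('n) * (CARD('n) - 1))) * \<kappa> ^ 4 / \<gamma> * sqrt S"
    (is "_ \<le> 2 * sqrt ?d * _ / _ * _")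
proof (rule power2_le_imp_le)
  have "2 * 1 \<le> CARD('n) * (CARD('n) - 1)" using assms(3) by (intro mult_le_mono) auto
  then have "2 \<le> ?d" by linarith
  moreover have "\<kappa> ^ 4 \<ge> 1" using assms(4) by (simp add: one_le_power)
  ultimately have "2 * 1 \<le> ?d * \<kappa> ^ 4" by (intro mult_mono) auto
  then have "4 * S \<le> 2 * ?d * \<kappa> ^ 4 * S"
    using assms(1,2) by (intro mult_right_mono) auto
  then have "\<gamma> \<le> 2 * ?d * \<kappa> ^ 4 * S" using assms(2) by linarith
  then have "\<gamma> * \<kappa> ^ 4 \<le> (2 * ?d * \<kappa> ^ 4 * S) * \<kappa> ^ 4"
    by (rule mult_right_mono) simp
  also have "\<dots> = S * (?d * (2 * \<kappa> ^ 8))" by (simp add: mult_ac flip: power_add)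
  finally have "\<gamma> * (\<gamma> * \<kappa> ^ 4) \<le> \<gamma> * (S * (?d * (2 * \<kappa> ^ 8)))"
    using assms(1) by (intro mult_left_mono) auto
  then show "(1 / sqrt (\<gamma> / (2 * \<kappa> ^ 4)))\<^sup>2 \<le> (2 * sqrt ?d * \<kappa> ^ 4 / \<gamma> * sqrt S)\<^sup>2"
    using assms \<open>4 * S \<le> 2 * ?d * \<kappa> ^ 4 * S\<close> \<open>2 \<le> ?d\<close>
    by (simp add: power_divide power_mult_distrib real_sqrt_pow2 field_simps del: of_nat_mult)
      (simp add: power2_eq_square mult_ac)
  show "0 \<le> 2 * sqrt ?d * \<kappa> ^ 4 / \<gamma> * sqrt S"
    using assms by simp
qed

section \<open>Distance between approximate and exact triangularizers\<close>

lemma approx_jt_distance_bound: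
  fixes V U U0 X :: "((real,'n::{finite,linorder}) vec,'n) vec"
    and M W :: "nat \<Rightarrow> ((real,'n) vec,'n) vec" and Lam :: "nat \<Rightarrow> 'n \<Rightarrow> real"
  assumes M: "M = (\<lambda>n. V ** mdiag (Lam n) ** matrix_inv V)" and V_inv: "invertible V"
    and nondeg: "\<And>i i'. i \<noteq> i' \<Longrightarrow> \<exists>n\<in>{1..N}. Lam n i \<noteq> Lam n i'"
    and gap: "\<And>i i'. i \<noteq> i' \<Longrightarrow> \<gamma> \<le> (\<Sum>n\<in>{1..N}. (Lam n i - Lam n i')\<^sup>2)" and "0 < \<gamma>"
    and K: "1 / sqrt (\<gamma> / (2 * cond_num V ^ 4)) \<le> K"
    and approx: "approx_jt N (\<lambda>n. M n + \<sigma> *\<^sub>R W n) U" and U: "U = U0 ** mat_exp (\<alpha> *\<^sub>R X)"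
    and exact: "exact_jt N M U0"
    and nM: "\<And>n. n \<in> {1..N} \<Longrightarrow> norm (M n) \<le> m" and "0 \<le> m"
    and nW: "\<And>n. n \<in> {1..N} \<Longrightarrow> norm (W n) \<le> 1"
    and skew: "transpose X = - X" and nX: "norm X = 1"
    and \<alpha>: "0 < \<alpha>" and \<sigma>: "0 \<le> \<sigma>" "\<alpha> + \<sigma> \<le> 1"
  shows "\<alpha> \<le> \<sigma> * K * sqrt (\<Sum>n\<in>{1..N}. (norm (W n))\<^sup>2)
    + real N * stationarity_remainder m / (\<gamma> / (2 * cond_num V ^ 4)) * (\<alpha> + \<sigma>)\<^sup>2"
proof -
  define h where "h = \<gamma> / (2 * cond_num V ^ 4)"
  define L where "L n = low (commutator (transpose U0 ** M n ** U0) X)" for n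
  have "0 < h" using \<open>0 < \<gamma>\<close> cond_num_ge_1[OF V_inv] by (simp add: h_def)
  have "\<gamma> \<le> 2 * cond_num V ^ 4 * (\<Sum>n\<in>{1..N}. (norm (L n))\<^sup>2)"
    using exact_jt_commutator_lower_bound[OF V_inv nondeg _ gap _ skew nX] exact \<open>0 < \<gamma>\<close>
    by (simp add: L_def M)
  then have "h \<le> (sqrt (\<Sum>n\<in>{1..N}. (norm (L n))\<^sup>2))\<^sup>2"
    using cond_num_ge_1[OF V_inv] by (simp add: h_def sum_nonneg field_simps)
  moreover have "\<alpha> * (sqrt (\<Sum>n\<in>{1..N}. (norm (L n))\<^sup>2))\<^sup>2
      \<le> \<sigma> * sqrt (\<Sum>n\<in>{1..N}. (norm (W n))\<^sup>2) * sqrt (\<Sum>n\<in>{1..N}. (norm (L n))\<^sup>2)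
        + real N * stationarity_remainder m * (\<alpha> + \<sigma>)\<^sup>2"
    using approx_jt_balance[OF approx[unfolded U] _ _ nM nW skew nX \<alpha> \<sigma>] exact
    by (simp add: L_def exact_jt_def sum_nonneg)
  ultimately have "\<alpha> \<le> \<sigma> * sqrt (\<Sum>n\<in>{1..N}. (norm (W n))\<^sup>2) / sqrt h
      + real N * stationarity_remainder m / h * (\<alpha> + \<sigma>)\<^sup>2"
    using \<open>0 < h\<close> \<sigma> \<open>0 \<le> m\<close>
    by (intro quadratic_balance_bound[where s = "sqrt (\<Sum>n\<in>{1..N}. (norm (L n))\<^sup>2)"])
      (auto simp: stationarity_remainder_def sum_nonneg)
  moreover have "\<sigma> * sqrt (\<Sum>n\<in>{1..N}. (norm (W n))\<^sup>2) * (1 / sqrt h)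
      \<le> \<sigma> * sqrt (\<Sum>n\<in>{1..N}. (norm (W n))\<^sup>2) * K"
    using K \<sigma>(1) by (intro mult_left_mono) (simp_all add: h_def sum_nonneg)
  ultimately show ?thesis by (simp add: h_def mult_ac)
qed

theorem lemma2:
  fixes V :: "((real,'d::{finite,linorder}) vec,'d) vec"
    and Lam :: "nat \<Rightarrow> 'd \<Rightarrow> real"
    and N :: nat
  defines "M \<equiv> (\<lambda>n. V ** mdiag (Lam n) ** matrix_inv V)"
  defines "\<gamma> \<equiv> Min {(\<Sum>n\<in>{1..N}. (Lam n i - Lam n i')\<^sup>2) | i i'. i < i'}"
  assumes V_inv: "invertible V"
    and nondeg: "\<And>i i'. i \<noteq> i' \<Longrightarrow> \<exists>n\<in>{1..N}. Lam n i \<noteq> Lam n i'"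
  shows "(\<exists>U0. exact_jt N M U0) \<and>
    (\<exists>C \<delta>. \<delta> > 0 \<and>
      (\<forall>(\<sigma>::real) (W::nat \<Rightarrow> ((real,'d) vec,'d) vec) U U0 (X::((real,'d) vec,'d) vec) (\<alpha>::real).
         \<sigma> > 0 \<longrightarrow> (\<forall>n\<in>{1..N}. norm (W n) \<le> 1) \<longrightarrow>
         approx_jt N (\<lambda>n. M n + \<sigma> *\<^sub>R W n) U \<longrightarrow>
         exact_jt N M U0 \<longrightarrow>
         transpose X = - X \<longrightarrow> norm X = 1 \<longrightarrow> \<alpha> > 0 \<longrightarrow>
         U = U0 ** mat_exp (\<alpha> *\<^sub>R X) \<longrightarrow>
         \<alpha> + \<sigma> < \<delta> \<longrightarrow>
         \<alpha> \<le> 2 * \<sigma> * sqrt (real (CARD('d) * (CARD('d) - 1))) * cond_num V ^ 4 / \<gamma>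
                * sqrt (\<Sum>n\<in>{1..N}. (norm (M n))\<^sup>2)
                * sqrt (\<Sum>n\<in>{1..N}. (norm (W n))\<^sup>2)
              + C * (\<alpha> + \<sigma>)\<^sup>2))"
proof -
  define m where "m = (\<Sum>n\<in>{1..N}. norm (M n))"
  define C where "C = real N * stationarity_remainder m / (\<gamma> / (2 * cond_num V ^ 4))"
  have "\<alpha> \<le> 2 * \<sigma> * sqrt (real (CARD('d) * (CARD('d) - 1))) * cond_num V ^ 4 / \<gamma>
      * sqrt (\<Sum>n\<in>{1..N}. (norm (M n))\<^sup>2) * sqrt (\<Sum>n\<in>{1..N}. (norm (W n))\<^sup>2)
      + C * (\<alpha> + \<sigma>)\<^sup>2"
    if "\<sigma> > 0" "\<forall>n\<in>{1..N}. norm (W n) \<le> 1" "approx_jt N (\<lambda>n. M n + \<sigma> *\<^sub>R W n) U"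
      "exact_jt N M U0" "transpose X = - X" "norm X = 1" "\<alpha> > 0" "U = U0 ** mat_exp (\<alpha> *\<^sub>R X)"
      "\<alpha> + \<sigma> < 1"
    for \<sigma> W U U0 X \<alpha>
  proof -
    have card: "2 \<le> CARD('d)" using skew_unit_card_ge_2 that(5,6) .
    have \<gamma>: "\<And>i i'. i \<noteq> i' \<Longrightarrow> \<gamma> \<le> (\<Sum>n\<in>{1..N}. (Lam n i - Lam n i')\<^sup>2)" "0 < \<gamma>"
      "\<gamma> \<le> 4 * (\<Sum>n\<in>{1..N}. (norm (M n))\<^sup>2)"
      using eigenvalue_gap_properties[OF V_inv nondeg card] by (simp_all add: \<gamma>_def M_def)
    have nM: "norm (M n) \<le> m" if "n \<in> {1..N}" for n
      unfolding m_def by (rule member_le_sum[OF that]) simp_all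
    from approx_jt_distance_bound[OF _ V_inv nondeg \<gamma>(1,2)
        inverse_sqrt_gap_le[OF \<gamma>(2,3) card cond_num_ge_1[OF V_inv]] that(3,8,4) nM]
    show ?thesis using that by (simp add: M_def m_def C_def sum_nonneg mult_ac)
  qed
  then show ?thesis
    using exact_jt_exists[OF V_inv, of N Lam] unfolding M_def
    by (intro conjI exI[of _ C] exI[of _ "1::real"]) auto
qed

end
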